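(* Suppose assumptions (A1)–(A5) below hold. Then the maximum likelihood estimation problem $$\max_{(x_t,\theta_t,u_t)}\ \sum_{i=0}^{n_x}\log p_\nu(\tilde x_{t_i}-Dx_{t_i})+\sum_{j=0}^{n_u}\log p_\omega(\tilde y_{\tau_j}-Cu_{\tau_j})$$ subject to, for all $t$: $u_t\in\arg\max\{f(x_{t+1},u,\theta_t,\pi_t):x_{t+1}=h(x_t,u),\ u\in\mathcal U\}$, $x_{t+1}=h(x_t,u_t)$, $\theta_{t+1}=g(x_t,u_t,\theta_t,\pi_t)$, $x_t\in\mathcal X$, $\theta_t\in\Theta$ (with the incentives $\pi_t$ given), can be expressed as a mixed integer linear program.
   Context: Model. Let $\mathcal X,\mathcal U,\Pi,\Theta$ be compact finite-dimensional sets with $\mathcal X,\mathcal U,\Theta$ convex. At each discrete time $t$ an agent has system state $x_t\in\mathcal X$, motivational state $\theta_t\in\Theta$, decision $u_t\in\mathcal U$; the coordinator applies known incentive $\pi_t\in\Pi$. Observations: $\tilde x_{t_i}=Dx_{t_i}+\nu_{t_i}$ ($i=0,\dots,n_x$), $\tilde y_{\tau_i}=Cu_{\tau_i}+\omega_{\tau_i}$ ($i=0,\dots,n_u$), with known matrices $C,D$ and noise densities $p_\nu,p_\omega$. $(a;b)$ denotes vertical concatenation. Assumptions: (A1) $\mathcal X,\mathcal U,\Pi,\Theta$ bounded finite-dimensional; $\mathcal X,\mathcal U,\Theta$ convex polyhedra described by finitely many linear inequalities; $\Pi$ described by finitely many mixed integer linear constraints. (A2) $f:\mathcal X\times\mathcal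 U\times\Theta\times\Pi\to\mathbb R$ deterministic, concave in $x$, strictly concave in $u$, concave in $\theta$, with $f(x,u,\theta,\pi)=-(x;u)^TQ(x;u)+(\theta;\pi)^TH(x;u)+\sum_{i=1}^K\min_{j\in J_i}\{F_{i,j}(x;u;\theta;\pi)+\zeta_{i,j}\}$, $Q$ positive semidefinite, $H,F_{i,j}$ matrices, $\zeta_{i,j}$ scalars, $J_i$ finite index sets. (A3) $h,g$ deterministic surjective with $h(x,u)=Ax+Bu+k$ and $g(x,u,\theta,\pi)=G_i(x;u;\theta;\pi)+\chi_i$ whenever $B_i(x;u;\theta;\pi)\le\psi_i$ (finitely many $i$), the polytopes $\{B_i(\cdot)\le\psi_i\}$ having disjoint interiors. (A4) Noise sequences $\{\nu_{t_i}\},\{\omega_{\tau_i}\}$ i.i.d. with i.i.d. components, zero mean and known finite variance; $\log p_\nu,\log p_\omega$ expressible using integer linear constraints. (A5) Observability: there exist $T$ and an incentive sequence such that $(x_0,\theta_0)$ can be computed exactly from noiseless measurements on $0\le t\le T$. *)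

theory Defs
  imports "HOL-Analysis.Analysis"
begin

definition vcat :: "real^'a \<Rightarrow> real^'b \<Rightarrow> real^('a + 'b)" where
  "vcat a b = (\<chi> i. case i of Inl j \<Rightarrow> a $ j | Inr j \<Rightarrow> b $ j)"

definition strictly_concave_on :: "'a::real_vector set \<Rightarrow> ('a \<Rightarrow> real) \<Rightarrow> bool" where
  "strictly_concave_on S f \<longleftrightarrow>
     (\<forall>x\<in>S. \<forall>y\<in>S. x \<noteq> y \<longrightarrow> (\<forall>t::real. 0 < t \<and> t < 1 \<longrightarrow>
        (1 - t) * f x + t * f y < f ((1 - t) *\<^sub>R x + t *\<^sub>R y)))"

definition milp_rep :: "'i set \<Rightarrow> ('i \<Rightarrow> real) set \<Rightarrow> bool" where
  "milp_rep I S \<longleftrightarrow> finite I \<and>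
     (\<exists>(nc::nat) (m::nat) (k::nat) (a::nat \<Rightarrow> 'i \<Rightarrow> real) (b::nat \<Rightarrow> nat \<Rightarrow> real)
        (c::nat \<Rightarrow> nat \<Rightarrow> real) (d::nat \<Rightarrow> real).
        S = {z. (\<forall>i. i \<notin> I \<longrightarrow> z i = 0) \<and>
               (\<exists>(y::nat \<Rightarrow> real) (w::nat \<Rightarrow> real). (\<forall>l<k. w l \<in> \<int>) \<and>
                  (\<forall>j<nc. (\<Sum>i\<in>I. a j i * z i) + (\<Sum>l<m. b j l * y l)
                           + (\<Sum>l<k. c j l * w l) \<le> d j))})"

definition milp_set :: "(real^'n) set \<Rightarrow> bool" where
  "milp_set P \<longleftrightarrow> milp_rep UNIV ((\<lambda>v i. v $ i) ` P)"

definition hypo_milp :: "(real^'n \<Rightarrow> real) \<Rightarrow> bool" where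
  "hypo_milp \<phi> \<longleftrightarrow>
     milp_rep UNIV ((\<lambda>(v, r). (\<lambda>i. case i of Some j \<Rightarrow> v $ j | None \<Rightarrow> r)) ` {(v, r). r \<le> \<phi> v})"

definition agent_traj ::
  "nat \<Rightarrow> (real^'x) set \<Rightarrow> (real^'u) set \<Rightarrow> (real^'th) set
   \<Rightarrow> (real^'x \<Rightarrow> real^'u \<Rightarrow> real^'th \<Rightarrow> real^'p \<Rightarrow> real)
   \<Rightarrow> (real^'x \<Rightarrow> real^'u \<Rightarrow> real^'x)
   \<Rightarrow> (real^'x \<Rightarrow> real^'u \<Rightarrow> real^'th \<Rightarrow> real^'p \<Rightarrow> real^'th)
   \<Rightarrow> (nat \<Rightarrow> real^'p) \<Rightarrow> (nat \<Rightarrow> real^'x) \<Rightarrow> (nat \<Rightarrow> real^'th) \<Rightarrow> (nat \<Rightarrow> real^'u) \<Rightarrow> bool"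
  where
  "agent_traj N Xs Us Ths f h g \<pi> X \<Theta> U \<longleftrightarrow>
     (\<forall>t<N. U t \<in> Us \<and>
        (\<forall>v\<in>Us. f (h (X t) v) v (\<Theta> t) (\<pi> t) \<le> f (h (X t) (U t)) (U t) (\<Theta> t) (\<pi> t)) \<and>
        X (Suc t) = h (X t) (U t) \<and>
        \<Theta> (Suc t) = g (X t) (U t) (\<Theta> t) (\<pi> t)) \<and>
     (\<forall>t\<le>N. X t \<in> Xs \<and> \<Theta> t \<in> Ths)"

definition mle_obj ::
  "(real^'ox \<Rightarrow> real) \<Rightarrow> (real^'oy \<Rightarrow> real) \<Rightarrow> real^'x^'ox \<Rightarrow> real^'u^'oy
   \<Rightarrow> (nat \<Rightarrow> real^'ox) \<Rightarrow> (nat \<Rightarrow> real^'oy) \<Rightarrow> nat \<Rightarrow> nat \<Rightarrow> (nat \<Rightarrow> nat) \<Rightarrow> (nat \<Rightarrow> nat)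
   \<Rightarrow> (nat \<Rightarrow> real^'x) \<Rightarrow> (nat \<Rightarrow> real^'u) \<Rightarrow> real" where
  "mle_obj p\<nu> p\<omega> D C xt yt nx nu tx tu X U =
     (\<Sum>i\<le>nx. ln (p\<nu> (xt i - D *v X (tx i)))) + (\<Sum>j\<le>nu. ln (p\<omega> (yt j - C *v U (tu j))))"

text \<open>Encoding of the decision variables (x_0..x_N, \<theta>_0..\<theta>_N, u_0..u_{N-1}) together with
  an epigraph variable r as one real vector with finitely many coordinates.\<close>
definition enc :: "nat \<Rightarrow> (nat \<Rightarrow> real^'x) \<Rightarrow> (nat \<Rightarrow> real^'th) \<Rightarrow> (nat \<Rightarrow> real^'u) \<Rightarrow> real
                   \<Rightarrow> (nat \<times> ('x + 'th + 'u)) option \<Rightarrow> real" where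
  "enc N X \<Theta> U r = (\<lambda>i. case i of
       None \<Rightarrow> r
     | Some (t, Inl j) \<Rightarrow> if t \<le> N then X t $ j else 0
     | Some (t, Inr (Inl j)) \<Rightarrow> if t \<le> N then \<Theta> t $ j else 0
     | Some (t, Inr (Inr j)) \<Rightarrow> if t < N then U t $ j else 0)"

definition enc_idx :: "nat \<Rightarrow> ((nat \<times> ('x::finite + 'th::finite + 'u::finite)) option) set" where
  "enc_idx N = insert None (Some ` (({..N} \<times> range Inl) \<union> ({..N} \<times> range (Inr \<circ> Inl))
                                     \<union> ({..<N} \<times> range (Inr \<circ> Inr))))"

text \<open>Hypograph of the MLE problem: encodings of feasible points together with
  any value r not exceeding the objective.  Maximizing r over this set is the MLE problem.\<close>
definition mle_hypo where
  "mle_hypo N Xs Us Ths f h g \<pi> p\<nu> p\<omega> D C xt yt nx nu tx tu =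
     {enc N X \<Theta> U r | X \<Theta> U r. agent_traj N Xs Us Ths f h g \<pi> X \<Theta> U \<and>
                               r \<le> mle_obj p\<nu> p\<omega> D C xt yt nx nu tx tu X U}"

end

theory Submission
  imports Defs
begin

text \<open>The
  hypographs of the log-likelihoods are mixed-integer representable by (A4), the state dynamics are
  linear, and the motive dynamics are affine on each of finitely many polytopes, selected by binary
  variables through big-M constraints.  The only nonconvex constraint, optimality of the agent's
  decision, is replaced by a KKT characterisation: as a function of \<open>u\<close>, \<open>f (h x u) u \<theta> p\<close> is a
  concave quadratic plus a sum of minima of affine functions, so \<open>u\<close> is optimal over the
  polyhedron \<open>\<U>\<close> iff for some set \<open>P\<close> of active constraints and some convex weights \<open>\<mu>\<close> on the
  minimising affine pieces the resulting supergradient lies in the cone spanned by the active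
  normals.  Binaries choose \<open>P\<close> and the support of \<open>\<mu>\<close>, the cone is written by its finitely many
  facets, and boundedness of \<open>\<X>\<close>, \<open>\<U>\<close>, \<open>\<Theta>\<close> makes every big-M constant finite.\<close>

section \<open>Affine expressions in the variables of a mixed-integer program\<close>

definition affine_expr :: "'i set \<Rightarrow> 'j set \<Rightarrow> (('i \<Rightarrow> real) \<Rightarrow> ('j \<Rightarrow> real) \<Rightarrow> real) \<Rightarrow> bool" where
  "affine_expr I J e \<longleftrightarrow> (\<exists>c \<alpha> \<beta>. \<forall>z y. e z y = c + (\<Sum>i\<in>I. \<alpha> i * z i) + (\<Sum>j\<in>J. \<beta> j * y j))"

lemma affine_expr_const: "affine_expr I J (\<lambda>z y. c)"
  unfolding affine_expr_def by (intro exI[of _ c] exI[of _ "\<lambda>_. 0"]) simp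

lemma affine_expr_var:
  assumes "finite I" "i \<in> I"
  shows "affine_expr I J (\<lambda>z y. z i)"
proof -
  have "(\<Sum>i'\<in>I. of_bool (i' = i) * z i') = z i" for z :: "_ \<Rightarrow> real"
    using assms by (simp add: of_bool_def if_distrib[of "\<lambda>c. c * _"] sum.delta cong: if_cong)
  then show ?thesis unfolding affine_expr_def
    by (intro exI[of _ 0] exI[of _ "\<lambda>i'. of_bool (i' = i)"] exI[of _ "\<lambda>_. 0"]) simp
qed

lemma affine_expr_aux_var:
  assumes "finite J" "j \<in> J"
  shows "affine_expr I J (\<lambda>z y. y j)"
proof -
  have "(\<Sum>j'\<in>J. of_bool (j' = j) * y j') = y j" for y :: "_ \<Rightarrow> real"
    using assms by (simp add: of_bool_def if_distrib[of "\<lambda>c. c * _"] sum.delta cong: if_cong)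
  then show ?thesis unfolding affine_expr_def
    by (intro exI[of _ 0] exI[of _ "\<lambda>_. 0"] exI[of _ "\<lambda>j'. of_bool (j' = j)"]) simp
qed

lemma affine_expr_add:
  assumes "affine_expr I J e" "affine_expr I J e'"
  shows "affine_expr I J (\<lambda>z y. e z y + e' z y)"
proof -
  obtain c \<alpha> \<beta> c' \<alpha>' \<beta>' where
    "\<forall>z y. e z y = c + (\<Sum>i\<in>I. \<alpha> i * z i) + (\<Sum>j\<in>J. \<beta> j * y j)"
    "\<forall>z y. e' z y = c' + (\<Sum>i\<in>I. \<alpha>' i * z i) + (\<Sum>j\<in>J. \<beta>' j * y j)"
    using assms unfolding affine_expr_def by blast
  then show ?thesis unfolding affine_expr_def
    by (intro exI[of _ "c + c'"] exI[of _ "\<lambda>i. \<alpha> i + \<alpha>' i"] exI[of _ "\<lambda>j. \<beta> j + \<beta>' j"])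
       (simp add: distrib_right sum.distrib)
qed

lemma affine_expr_scale:
  assumes "affine_expr I J e"
  shows "affine_expr I J (\<lambda>z y. a * e z y)"
proof -
  obtain c \<alpha> \<beta> where "\<forall>z y. e z y = c + (\<Sum>i\<in>I. \<alpha> i * z i) + (\<Sum>j\<in>J. \<beta> j * y j)"
    using assms unfolding affine_expr_def by blast
  then show ?thesis unfolding affine_expr_def
    by (intro exI[of _ "a * c"] exI[of _ "\<lambda>i. a * \<alpha> i"] exI[of _ "\<lambda>j. a * \<beta> j"])
       (simp add: distrib_left sum_distrib_left mult.assoc)
qed

lemma affine_expr_scale_right: "affine_expr I J e \<Longrightarrow> affine_expr I J (\<lambda>z y. e z y * a)"
  using affine_expr_scale[of I J e a] by (simp add: mult.commute)

lemma affine_expr_neg: "affine_expr I J e \<Longrightarrow> affine_expr I J (\<lambda>z y. - e z y)"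
  using affine_expr_scale[of I J e "-1"] by simp

lemma affine_expr_diff:
  "affine_expr I J e \<Longrightarrow> affine_expr I J e' \<Longrightarrow> affine_expr I J (\<lambda>z y. e z y - e' z y)"
  using affine_expr_add[of I J e "\<lambda>z y. - e' z y"] affine_expr_neg[of I J e'] by simp

lemma affine_expr_sum:
  "finite S \<Longrightarrow> (\<And>s. s \<in> S \<Longrightarrow> affine_expr I J (e s)) \<Longrightarrow> affine_expr I J (\<lambda>z y. \<Sum>s\<in>S. e s z y)"
  by (induction S rule: finite_induct) (auto intro: affine_expr_const affine_expr_add)

lemma affine_expr_case_option:
  "affine_expr I J e \<Longrightarrow> (\<And>a. affine_expr I J (e' a)) \<Longrightarrow>
   affine_expr I J (\<lambda>z y. case x of None \<Rightarrow> e z y | Some a \<Rightarrow> e' a z y)"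
  by (cases x) auto

lemma affine_expr_mono:
  assumes "affine_expr I J e" "I \<subseteq> I'" "J \<subseteq> J'" "finite I'" "finite J'"
  shows "affine_expr I' J' e"
proof -
  have extend: "(\<Sum>k\<in>K'. (if k \<in> K then \<gamma> k else 0) * w k) = (\<Sum>k\<in>K. \<gamma> k * w k)"
    if "K \<subseteq> K'" "finite K'" for K K' and \<gamma> w :: "_ \<Rightarrow> real"
  proof -
    have "(\<Sum>k\<in>K'. (if k \<in> K then \<gamma> k else 0) * w k) = (\<Sum>k\<in>K'. if k \<in> K then \<gamma> k * w k else 0)"
      by (intro sum.cong) auto
    also have "\<dots> = (\<Sum>k\<in>K' \<inter> K. \<gamma> k * w k)"
      using that(2) by (rule sum.inter_restrict[symmetric])
    also have "K' \<inter> K = K"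
      using that(1) by blast
    finally show ?thesis .
  qed
  obtain c \<alpha> \<beta> where "\<forall>z y. e z y = c + (\<Sum>i\<in>I. \<alpha> i * z i) + (\<Sum>j\<in>J. \<beta> j * y j)"
    using assms(1) unfolding affine_expr_def by blast
  then show ?thesis unfolding affine_expr_def
    by (intro exI[of _ c] exI[of _ "\<lambda>i. if i \<in> I then \<alpha> i else 0"] exI[of _ "\<lambda>j. if j \<in> J then \<beta> j else 0"])
       (simp add: extend assms)
qed

lemma affine_expr_bounded:
  assumes "affine_expr I J e"
  shows "\<exists>M. \<forall>z y. (\<forall>i\<in>I. \<bar>z i\<bar> \<le> R) \<longrightarrow> (\<forall>j\<in>J. \<bar>y j\<bar> \<le> R) \<longrightarrow> \<bar>e z y\<bar> \<le> M"
proof -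
  obtain c \<alpha> \<beta> where e: "\<forall>z y. e z y = c + (\<Sum>i\<in>I. \<alpha> i * z i) + (\<Sum>j\<in>J. \<beta> j * y j)"
    using assms unfolding affine_expr_def by blast
  have lin_bound: "\<bar>\<Sum>k\<in>K. \<gamma> k * w k\<bar> \<le> (\<Sum>k\<in>K. \<bar>\<gamma> k\<bar> * R)" if "\<forall>k\<in>K. \<bar>w k\<bar> \<le> R"
    for K and \<gamma> w :: "_ \<Rightarrow> real"
    using that by (intro order_trans[OF sum_abs] sum_mono) (auto simp: abs_mult intro: mult_left_mono)
  show ?thesis
  proof (intro exI allI impI)
    fix z y assume "\<forall>i\<in>I. \<bar>z i\<bar> \<le> R" "\<forall>j\<in>J. \<bar>y j\<bar> \<le> R"
    then have "\<bar>\<Sum>i\<in>I. \<alpha> i * z i\<bar> \<le> (\<Sum>i\<in>I. \<bar>\<alpha> i\<bar> * R)" "\<bar>\<Sum>j\<in>J. \<beta> j * y j\<bar> \<le> (\<Sum>j\<in>J. \<bar>\<beta> j\<bar> * R)"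
      by (simp_all add: lin_bound)
    moreover have "e z y = c + (\<Sum>i\<in>I. \<alpha> i * z i) + (\<Sum>j\<in>J. \<beta> j * y j)"
      using e by blast
    ultimately show "\<bar>e z y\<bar> \<le> \<bar>c\<bar> + (\<Sum>i\<in>I. \<bar>\<alpha> i\<bar> * R) + (\<Sum>j\<in>J. \<bar>\<beta> j\<bar> * R)"
      by linarith
  qed
qed

definition affine_vexpr :: "'i set \<Rightarrow> 'j set \<Rightarrow> (('i \<Rightarrow> real) \<Rightarrow> ('j \<Rightarrow> real) \<Rightarrow> real^'n) \<Rightarrow> bool" where
  "affine_vexpr I J V \<longleftrightarrow> (\<forall>q. affine_expr I J (\<lambda>z y. V z y $ q))"

lemma affine_expr_component: "affine_vexpr I J V \<Longrightarrow> affine_expr I J (\<lambda>z y. V z y $ q)"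
  by (simp add: affine_vexpr_def)

lemma affine_vexpr_lambda: "(\<And>q. affine_expr I J (\<lambda>z y. e z y q)) \<Longrightarrow> affine_vexpr I J (\<lambda>z y. \<chi> q. e z y q)"
  by (simp add: affine_vexpr_def)

lemma affine_vexpr_const: "affine_vexpr I J (\<lambda>z y. c)"
  by (simp add: affine_vexpr_def affine_expr_const)

lemma affine_vexpr_add: "affine_vexpr I J V \<Longrightarrow> affine_vexpr I J W \<Longrightarrow> affine_vexpr I J (\<lambda>z y. V z y + W z y)"
  by (simp add: affine_vexpr_def affine_expr_add)

lemma affine_vexpr_diff: "affine_vexpr I J V \<Longrightarrow> affine_vexpr I J W \<Longrightarrow> affine_vexpr I J (\<lambda>z y. V z y - W z y)"
  by (simp add: affine_vexpr_def affine_expr_diff)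

lemma affine_vexpr_matrix_vector_mult: "affine_vexpr I J V \<Longrightarrow> affine_vexpr I J (\<lambda>z y. M *v V z y)"
  unfolding affine_vexpr_def matrix_vector_mult_def
  by (auto intro!: affine_expr_sum affine_expr_scale)

lemma affine_vexpr_scaleR: "affine_expr I J e \<Longrightarrow> affine_vexpr I J (\<lambda>z y. e z y *\<^sub>R v)"
  unfolding affine_vexpr_def by (auto intro!: affine_expr_scale_right)

lemma affine_vexpr_sum:
  "finite S \<Longrightarrow> (\<And>s. s \<in> S \<Longrightarrow> affine_vexpr I J (V s)) \<Longrightarrow> affine_vexpr I J (\<lambda>z y. \<Sum>s\<in>S. V s z y)"
  unfolding affine_vexpr_def by (auto intro!: affine_expr_sum)

lemma vcat_nth_Inl [simp]: "vcat a b $ Inl j = a $ j"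
  by (simp add: vcat_def)

lemma vcat_nth_Inr [simp]: "vcat a b $ Inr j = b $ j"
  by (simp add: vcat_def)

lemma vcat_add: "vcat (a + a') (b + b') = vcat a b + vcat a' b'"
  by (simp add: vec_eq_iff vcat_def split: sum.split)

lemma vcat_scaleR: "vcat (c *\<^sub>R a) (c *\<^sub>R b) = c *\<^sub>R vcat a b"
  by (simp add: vec_eq_iff vcat_def split: sum.split)

lemma affine_vexpr_vcat:
  "affine_vexpr I J V \<Longrightarrow> affine_vexpr I J W \<Longrightarrow> affine_vexpr I J (\<lambda>z y. vcat (V z y) (W z y))"
  unfolding affine_vexpr_def
proof
  fix q
  assume "\<forall>q. affine_expr I J (\<lambda>z y. V z y $ q)" "\<forall>q. affine_expr I J (\<lambda>z y. W z y $ q)"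
  then show "affine_expr I J (\<lambda>z y. vcat (V z y) (W z y) $ q)"
    by (cases q) simp_all
qed

lemma affine_expr_inner_left: "affine_vexpr I J V \<Longrightarrow> affine_expr I J (\<lambda>z y. c \<bullet> V z y)"
  unfolding affine_vexpr_def inner_vec_def by (auto intro!: affine_expr_sum affine_expr_scale)

lemma affine_expr_inner_right: "affine_vexpr I J V \<Longrightarrow> affine_expr I J (\<lambda>z y. V z y \<bullet> c)"
  unfolding affine_vexpr_def inner_vec_def by (auto intro!: affine_expr_sum affine_expr_scale_right)

lemma linear_eq_inner_axis:
  fixes L :: "real^'n \<Rightarrow> real"
  assumes "linear L"
  shows "L d = (\<chi> q. L (axis q 1)) \<bullet> d"
proof -
  have "L d = L (\<Sum>q\<in>UNIV. d $ q *\<^sub>R axis q 1)"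
    using basis_expansion[of d] by (simp add: scalar_mult_eq_scaleR)
  also have "\<dots> = (\<Sum>q\<in>UNIV. d $ q * L (axis q 1))"
    by (simp add: linear_sum[OF assms] linear_scale[OF assms] o_def)
  also have "\<dots> = (\<chi> q. L (axis q 1)) \<bullet> d"
    by (simp add: inner_vec_def mult.commute)
  finally show ?thesis .
qed

section \<open>Mixed-integer linear systems\<close>

record 'i mil_system =
  n_cons :: nat
  n_real :: nat
  n_int :: nat
  coef :: "nat \<Rightarrow> 'i \<Rightarrow> real"
  coef_real :: "nat \<Rightarrow> nat \<Rightarrow> real"
  coef_int :: "nat \<Rightarrow> nat \<Rightarrow> real"
  rhs :: "nat \<Rightarrow> real"

definition mil_row :: "'i set \<Rightarrow> 'i mil_system \<Rightarrow> nat \<Rightarrow> ('i \<Rightarrow> real) \<Rightarrow> (nat \<Rightarrow> real) \<Rightarrow> (nat \<Rightarrow> real) \<Rightarrow> real"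
  where "mil_row I M j z y w = (\<Sum>i\<in>I. coef M j i * z i) + (\<Sum>l<n_real M. coef_real M j l * y l)
           + (\<Sum>l<n_int M. coef_int M j l * w l) - rhs M j"

definition mil_feasible :: "'i set \<Rightarrow> 'i mil_system \<Rightarrow> ('i \<Rightarrow> real) \<Rightarrow> (nat \<Rightarrow> real) \<Rightarrow> (nat \<Rightarrow> real) \<Rightarrow> bool"
  where "mil_feasible I M z y w \<longleftrightarrow> (\<forall>l<n_int M. w l \<in> \<int>) \<and> (\<forall>j<n_cons M. mil_row I M j z y w \<le> 0)"

lemma milp_rep_iff_system:
  "milp_rep I S \<longleftrightarrow> finite I \<and> (\<exists>M. S = {z. (\<forall>i. i \<notin> I \<longrightarrow> z i = 0) \<and> (\<exists>y w. mil_feasible I M z y w)})"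
proof
  assume "milp_rep I S"
  then obtain nc m k :: nat and a :: "nat \<Rightarrow> _ \<Rightarrow> real" and b c :: "nat \<Rightarrow> nat \<Rightarrow> real" and d
    where "finite I" and S: "S = {z. (\<forall>i. i \<notin> I \<longrightarrow> z i = 0) \<and>
      (\<exists>y w. (\<forall>l<k. w l \<in> \<int>) \<and> (\<forall>j<nc. (\<Sum>i\<in>I. a j i * z i) + (\<Sum>l<m. b j l * y l)
         + (\<Sum>l<k. c j l * w l) \<le> d j))}"
    unfolding milp_rep_def by blast
  let ?M = "\<lparr>n_cons = nc, n_real = m, n_int = k, coef = a, coef_real = b, coef_int = c, rhs = d\<rparr>"
  have "S = {z. (\<forall>i. i \<notin> I \<longrightarrow> z i = 0) \<and> (\<exists>y w. mil_feasible I ?M z y w)}"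
    unfolding S mil_feasible_def mil_row_def by simp
  with \<open>finite I\<close> show "finite I \<and> (\<exists>M. S = {z. (\<forall>i. i \<notin> I \<longrightarrow> z i = 0) \<and> (\<exists>y w. mil_feasible I M z y w)})"
    by blast
next
  assume "finite I \<and> (\<exists>M. S = {z. (\<forall>i. i \<notin> I \<longrightarrow> z i = 0) \<and> (\<exists>y w. mil_feasible I M z y w)})"
  then obtain M where "finite I" "S = {z. (\<forall>i. i \<notin> I \<longrightarrow> z i = 0) \<and> (\<exists>y w. mil_feasible I M z y w)}"
    by blast
  then show "milp_rep I S"
    unfolding milp_rep_def mil_feasible_def mil_row_def diff_le_0_iff_le
    by (intro conjI exI[of _ "n_cons M"] exI[of _ "n_real M"] exI[of _ "n_int M"] exI[of _ "coef M"]
          exI[of _ "coef_real M"] exI[of _ "coef_int M"] exI[of _ "rhs M"])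
qed

lemma mil_row_cong:
  assumes "\<And>l. l < n_real M \<Longrightarrow> y l = y' l" "\<And>l. l < n_int M \<Longrightarrow> w l = w' l"
  shows "mil_row I M j z y w = mil_row I M j z y' w'"
  unfolding mil_row_def using assms by (intro arg_cong2[where f = "(-)"] arg_cong2[where f = "(+)"] sum.cong) auto

lemma enumerate_finite_set:
  assumes "finite S"
  obtains e where "bij_betw e {..<card S} S"
  using ex_bij_betw_nat_finite[OF assms] by (auto simp: atLeast0LessThan)

lemma affine_system_rows:
  fixes Cs :: "(('i \<Rightarrow> real) \<Rightarrow> ('j \<Rightarrow> real) \<Rightarrow> real) set"
  assumes "finite J" "Jint \<subseteq> J" "finite Cs" "\<forall>e\<in>Cs. affine_expr I J e"
  obtains M eR eZ where "bij_betw eR {..<n_real M} (J - Jint)" "bij_betw eZ {..<n_int M} Jint"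
    and "Cs = (\<lambda>l z y. mil_row I M l z (y \<circ> eR) (y \<circ> eZ)) ` {..<n_cons M}"
proof -
  have "\<forall>e\<in>Cs. \<exists>p. \<forall>z y. e z y = fst p + (\<Sum>i\<in>I. fst (snd p) i * z i) + (\<Sum>j\<in>J. snd (snd p) j * y j)"
    using assms(4) unfolding affine_expr_def by fastforce
  then obtain p where p: "\<forall>e\<in>Cs. \<forall>z y. e z y = fst (p e) + (\<Sum>i\<in>I. fst (snd (p e)) i * z i) + (\<Sum>j\<in>J. snd (snd (p e)) j * y j)"
    by (rule bchoice[THEN exE])
  obtain eR where eR: "bij_betw eR {..<card (J - Jint)} (J - Jint)"
    using finite_Diff[OF assms(1)] by (rule enumerate_finite_set)
  obtain eZ where eZ: "bij_betw eZ {..<card Jint} Jint"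
    using finite_subset[OF assms(2,1)] by (rule enumerate_finite_set)
  obtain eC where eC: "bij_betw eC {..<card Cs} Cs"
    using assms(3) by (rule enumerate_finite_set)
  define \<beta> where "\<beta> l = snd (snd (p (eC l)))" for l
  define M where "M = \<lparr>n_cons = card Cs, n_real = card (J - Jint), n_int = card Jint,
      coef = \<lambda>l. fst (snd (p (eC l))), coef_real = \<lambda>l k. \<beta> l (eR k), coef_int = \<lambda>l k. \<beta> l (eZ k),
      rhs = \<lambda>l. - fst (p (eC l))\<rparr>"
  have "eC l = (\<lambda>z y. mil_row I M l z (y \<circ> eR) (y \<circ> eZ))" if "l < card Cs" for l
  proof (intro ext)
    fix z y
    have "(\<Sum>j\<in>J. \<beta> l j * y j) = (\<Sum>j\<in>J - Jint. \<beta> l j * y j) + (\<Sum>j\<in>Jint. \<beta> l j * y j)"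
      using assms(2,1) by (rule sum.subset_diff)
    also have "\<dots> = (\<Sum>k<card (J - Jint). \<beta> l (eR k) * y (eR k)) + (\<Sum>k<card Jint. \<beta> l (eZ k) * y (eZ k))"
      using sum.reindex_bij_betw[OF eR, of "\<lambda>j. \<beta> l j * y j"] sum.reindex_bij_betw[OF eZ, of "\<lambda>j. \<beta> l j * y j"]
      by simp
    finally have "(\<Sum>j\<in>J. \<beta> l j * y j)
        = (\<Sum>k<card (J - Jint). \<beta> l (eR k) * y (eR k)) + (\<Sum>k<card Jint. \<beta> l (eZ k) * y (eZ k))" .
    moreover have "eC l \<in> Cs"
      using that eC by (auto simp: bij_betw_def)
    ultimately show "eC l z y = mil_row I M l z (y \<circ> eR) (y \<circ> eZ)"
      by (simp add: p[rule_format, of "eC l"] M_def \<beta>_def mil_row_def)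
  qed
  moreover have dims: "n_cons M = card Cs" "n_real M = card (J - Jint)" "n_int M = card Jint"
    by (simp_all add: M_def)
  ultimately have "Cs = (\<lambda>l z y. mil_row I M l z (y \<circ> eR) (y \<circ> eZ)) ` {..<n_cons M}"
    using eC by (auto simp: bij_betw_def)
  with eR eZ show ?thesis
    by (intro that[of eR M eZ]) (simp_all only: dims)
qed

lemma milp_rep_affine_system:
  fixes Cs :: "(('i \<Rightarrow> real) \<Rightarrow> ('j \<Rightarrow> real) \<Rightarrow> real) set"
  assumes "finite I" "finite J" "Jint \<subseteq> J" "finite Cs" "\<forall>e\<in>Cs. affine_expr I J e"
  shows "milp_rep I {z. (\<forall>i. i \<notin> I \<longrightarrow> z i = 0) \<and> (\<exists>y. (\<forall>j\<in>Jint. y j \<in> \<int>) \<and> (\<forall>e\<in>Cs. e z y \<le> 0))}"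
proof -
  obtain M eR eZ where eR: "bij_betw eR {..<n_real M} (J - Jint)" and eZ: "bij_betw eZ {..<n_int M} Jint"
    and Cs: "Cs = (\<lambda>l z y. mil_row I M l z (y \<circ> eR) (y \<circ> eZ)) ` {..<n_cons M}"
    using affine_system_rows[OF assms(2-5)] by blast
  have "(\<exists>y. (\<forall>j\<in>Jint. y j \<in> \<int>) \<and> (\<forall>e\<in>Cs. e z y \<le> 0)) \<longleftrightarrow> (\<exists>yr w. mil_feasible I M z yr w)" for z
  proof
    assume "\<exists>y. (\<forall>j\<in>Jint. y j \<in> \<int>) \<and> (\<forall>e\<in>Cs. e z y \<le> 0)"
    then obtain y where "\<forall>j\<in>Jint. y j \<in> \<int>" "\<forall>e\<in>Cs. e z y \<le> 0"
      by blast
    then have "mil_feasible I M z (y \<circ> eR) (y \<circ> eZ)"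
      using eZ by (auto simp: mil_feasible_def Cs bij_betwE)
    then show "\<exists>yr w. mil_feasible I M z yr w"
      by blast
  next
    assume "\<exists>yr w. mil_feasible I M z yr w"
    then obtain yr w where feas: "mil_feasible I M z yr w"
      by blast
    define y where "y j = (if j \<in> Jint then w (inv_into {..<n_int M} eZ j)
                           else yr (inv_into {..<n_real M} eR j))" for j
    have "(y \<circ> eR) k = yr k" if "k < n_real M" for k
      using that eR by (auto simp: y_def bij_betw_def inv_into_f_f)
    moreover have "(y \<circ> eZ) k = w k" if "k < n_int M" for k
      using that eZ by (auto simp: y_def bij_betw_def inv_into_f_f)
    ultimately have "mil_row I M l z (y \<circ> eR) (y \<circ> eZ) = mil_row I M l z yr w" for l
      by (intro mil_row_cong) simp_all
    then have "\<forall>e\<in>Cs. e z y \<le> 0"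
      using feas by (auto simp: Cs mil_feasible_def)
    moreover have "y j \<in> \<int>" if "j \<in> Jint" for j
    proof -
      have "inv_into {..<n_int M} eZ j < n_int M"
        using that eZ inv_into_into[of j eZ "{..<n_int M}"] by (simp add: bij_betw_def)
      then show ?thesis
        using that feas by (simp add: y_def mil_feasible_def)
    qed
    ultimately show "\<exists>y. (\<forall>j\<in>Jint. y j \<in> \<int>) \<and> (\<forall>e\<in>Cs. e z y \<le> 0)"
      by blast
  qed
  with assms(1) show ?thesis
    unfolding milp_rep_iff_system by (intro conjI exI[of _ M]) auto
qed

definition hypo_point :: "real^'n \<Rightarrow> real \<Rightarrow> 'n option \<Rightarrow> real" where
  "hypo_point v r = (\<lambda>i. case i of Some j \<Rightarrow> v $ j | None \<Rightarrow> r)"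

lemma hypo_point_inject: "hypo_point v r = hypo_point v' r' \<longleftrightarrow> v = v' \<and> r = r'"
proof
  assume eq: "hypo_point v r = hypo_point v' r'"
  have "r = r'"
    using fun_cong[OF eq, of None] by (simp add: hypo_point_def)
  moreover have "v = v'"
    using fun_cong[OF eq, of "Some _"] by (simp add: hypo_point_def vec_eq_iff)
  ultimately show "v = v' \<and> r = r'"
    by simp
qed simp

definition hypo_system :: "(real^'n \<Rightarrow> real) \<Rightarrow> 'n option mil_system" where
  "hypo_system \<phi> = (SOME M. \<forall>v r. r \<le> \<phi> v \<longleftrightarrow> (\<exists>y w. mil_feasible UNIV M (hypo_point v r) y w))"

lemma hypo_system:
  assumes "hypo_milp \<phi>"
  shows "r \<le> \<phi> v \<longleftrightarrow> (\<exists>y w. mil_feasible UNIV (hypo_system \<phi>) (hypo_point v r) y w)"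
proof -
  obtain M where M: "(\<lambda>(v, r). hypo_point v r) ` {(v, r). r \<le> \<phi> v} =
      {z. (\<exists>y w. mil_feasible UNIV M z y w)}"
    using assms unfolding hypo_milp_def milp_rep_iff_system hypo_point_def by auto
  have "r \<le> \<phi> v \<longleftrightarrow> (\<exists>y w. mil_feasible UNIV M (hypo_point v r) y w)" for v r
  proof -
    have "r \<le> \<phi> v \<longleftrightarrow> hypo_point v r \<in> (\<lambda>(v, r). hypo_point v r) ` {(v, r). r \<le> \<phi> v}"
      by (auto simp: hypo_point_inject)
    then show ?thesis
      unfolding M by simp
  qed
  then have "\<exists>M. \<forall>v r. r \<le> \<phi> v \<longleftrightarrow> (\<exists>y w. mil_feasible UNIV M (hypo_point v r) y w)"
    by blast
  from someI_ex[OF this] show ?thesis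
    unfolding hypo_system_def by blast
qed

definition eq_cons :: "(('i \<Rightarrow> real) \<Rightarrow> ('j \<Rightarrow> real) \<Rightarrow> real) \<Rightarrow> (('i \<Rightarrow> real) \<Rightarrow> ('j \<Rightarrow> real) \<Rightarrow> real) set" where
  "eq_cons e = {e, \<lambda>z y. - e z y}"

lemma eq_cons_iff: "(\<forall>c\<in>eq_cons e. c z y \<le> 0) \<longleftrightarrow> e z y = 0"
  by (auto simp: eq_cons_def)

lemma finite_eq_cons [simp]: "finite (eq_cons e)"
  by (simp add: eq_cons_def)

lemma affine_eq_cons: "c \<in> eq_cons e \<Longrightarrow> affine_expr I J e \<Longrightarrow> affine_expr I J c"
  by (auto simp: eq_cons_def intro: affine_expr_neg)

definition veq_cons :: "(('i \<Rightarrow> real) \<Rightarrow> ('j \<Rightarrow> real) \<Rightarrow> real^'n) \<Rightarrow> (('i \<Rightarrow> real) \<Rightarrow> ('j \<Rightarrow> real) \<Rightarrow> real) set" where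
  "veq_cons V = (\<Union>q. eq_cons (\<lambda>z y. V z y $ q))"

lemma veq_cons_iff: "(\<forall>c\<in>veq_cons V. c z y \<le> 0) \<longleftrightarrow> V z y = 0"
  by (auto simp: veq_cons_def eq_cons_iff vec_eq_iff)

lemma finite_veq_cons [simp]: "finite (veq_cons V)"
  by (simp add: veq_cons_def)

lemma affine_veq_cons: "c \<in> veq_cons V \<Longrightarrow> affine_vexpr I J V \<Longrightarrow> affine_expr I J c"
  by (auto simp: veq_cons_def affine_vexpr_def intro: affine_eq_cons)

definition big_M :: "real \<Rightarrow> 'j \<Rightarrow> (('i \<Rightarrow> real) \<Rightarrow> ('j \<Rightarrow> real) \<Rightarrow> real) \<Rightarrow> ('i \<Rightarrow> real) \<Rightarrow> ('j \<Rightarrow> real) \<Rightarrow> real" where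
  "big_M M j e = (\<lambda>z y. e z y - M * (1 - y j))"

lemma big_M_active: "y j = 1 \<Longrightarrow> big_M M j e z y \<le> 0 \<longleftrightarrow> e z y \<le> 0"
  by (simp add: big_M_def)

lemma affine_big_M:
  "affine_expr I J e \<Longrightarrow> finite J \<Longrightarrow> j \<in> J \<Longrightarrow> affine_expr I J (big_M M j e)"
  unfolding big_M_def by (intro affine_expr_diff affine_expr_scale affine_expr_const affine_expr_aux_var)

definition box_bound :: "'i set \<Rightarrow> 'j set \<Rightarrow> real \<Rightarrow> (('i \<Rightarrow> real) \<Rightarrow> ('j \<Rightarrow> real) \<Rightarrow> real) \<Rightarrow> real" where
  "box_bound I J R e = (SOME M. \<forall>z y. (\<forall>i\<in>I. \<bar>z i\<bar> \<le> R) \<longrightarrow> (\<forall>j\<in>J. \<bar>y j\<bar> \<le> R) \<longrightarrow> \<bar>e z y\<bar> \<le> M)"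

lemma box_bound:
  assumes "affine_expr I J e" "\<forall>i\<in>I. \<bar>z i\<bar> \<le> R" "\<forall>j\<in>J. \<bar>y j\<bar> \<le> R"
  shows "e z y \<le> box_bound I J R e"
  using someI_ex[OF affine_expr_bounded[OF assms(1), of R]] assms(2,3)
  unfolding box_bound_def by fastforce

definition ineq_descr :: "'a::euclidean_space set \<Rightarrow> nat \<times> (nat \<Rightarrow> 'a) \<times> (nat \<Rightarrow> real)" where
  "ineq_descr S = (SOME (n, a, b). S = {x. \<forall>l<n. a l \<bullet> x \<le> b l})"

definition ineq_num :: "'a::euclidean_space set \<Rightarrow> nat" where
  "ineq_num S = fst (ineq_descr S)"

definition ineq_normal :: "'a::euclidean_space set \<Rightarrow> nat \<Rightarrow> 'a" where
  "ineq_normal S = fst (snd (ineq_descr S))"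

definition ineq_rhs :: "'a::euclidean_space set \<Rightarrow> nat \<Rightarrow> real" where
  "ineq_rhs S = snd (snd (ineq_descr S))"

lemma polyhedron_ex_ineqs:
  assumes "polyhedron S"
  shows "\<exists>(n::nat) a b. S = {x. \<forall>l<n. a l \<bullet> x \<le> b l}"
proof -
  obtain F where F: "finite F" "S = \<Inter>F" "\<forall>h\<in>F. \<exists>a b. a \<noteq> 0 \<and> h = {x. a \<bullet> x \<le> b}"
    using assms unfolding polyhedron_def by blast
  then obtain hs where hs: "set hs = F"
    using finite_list by blast
  from F(3) obtain a b where ab: "\<forall>h\<in>F. h = {x. a h \<bullet> x \<le> b h}"
    by metis
  have "x \<in> h \<longleftrightarrow> a h \<bullet> x \<le> b h" if "h \<in> F" for x h
    using ab that by (metis mem_Collect_eq)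
  then have "x \<in> S \<longleftrightarrow> (\<forall>h\<in>set hs. a h \<bullet> x \<le> b h)" for x
    using F(2) hs by auto
  then have "x \<in> S \<longleftrightarrow> (\<forall>l<length hs. a (hs ! l) \<bullet> x \<le> b (hs ! l))" for x
    by (simp add: all_set_conv_all_nth)
  then have "S = {x. \<forall>l<length hs. (a \<circ> (!) hs) l \<bullet> x \<le> (b \<circ> (!) hs) l}"
    by auto
  then show ?thesis
    by (intro exI)
qed

lemma polyhedron_ineqs:
  assumes "polyhedron S"
  shows "x \<in> S \<longleftrightarrow> (\<forall>l<ineq_num S. ineq_normal S l \<bullet> x \<le> ineq_rhs S l)"
proof -
  obtain n :: nat and a b where "S = {x. \<forall>l<n. a l \<bullet> x \<le> b l}"
    using polyhedron_ex_ineqs[OF assms] by blast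
  then have "\<exists>nab :: nat \<times> (nat \<Rightarrow> 'a) \<times> (nat \<Rightarrow> real). S = {x. \<forall>l<fst nab. fst (snd nab) l \<bullet> x \<le> snd (snd nab) l}"
    by (intro exI[of _ "(n, a, b)"]) simp
  from someI_ex[OF this] have "S = {x. \<forall>l<ineq_num S. ineq_normal S l \<bullet> x \<le> ineq_rhs S l}"
    unfolding ineq_num_def ineq_normal_def ineq_rhs_def ineq_descr_def by (simp add: case_prod_beta')
  then show ?thesis
    by blast
qed

definition norm_bound :: "'a::real_normed_vector set \<Rightarrow> real" where
  "norm_bound S = (SOME R. \<forall>x\<in>S. norm x \<le> R)"

lemma norm_le_norm_bound: "bounded S \<Longrightarrow> x \<in> S \<Longrightarrow> norm x \<le> norm_bound S"
  using someI_ex[of "\<lambda>R. \<forall>x\<in>S. norm x \<le> R"] unfolding norm_bound_def bounded_iff by blast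

definition poly_cons :: "'a::euclidean_space set \<Rightarrow> (('i \<Rightarrow> real) \<Rightarrow> nat \<Rightarrow> 'a) \<Rightarrow> nat set
    \<Rightarrow> (('i \<Rightarrow> real) \<Rightarrow> ('j \<Rightarrow> real) \<Rightarrow> real) set" where
  "poly_cons S V T = (\<lambda>(t, l) z y. ineq_normal S l \<bullet> V z t - ineq_rhs S l) ` (T \<times> {..<ineq_num S})"

lemma poly_cons_iff:
  assumes "polyhedron S"
  shows "(\<forall>c\<in>poly_cons S V T. c z y \<le> 0) \<longleftrightarrow> (\<forall>t\<in>T. V z t \<in> S)"
  by (auto simp: poly_cons_def polyhedron_ineqs[OF assms])

lemma finite_poly_cons: "finite T \<Longrightarrow> finite (poly_cons S V T)"
  by (simp add: poly_cons_def)

lemma affine_poly_cons: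
  "c \<in> poly_cons S V T \<Longrightarrow> (\<And>t. t \<in> T \<Longrightarrow> affine_vexpr I J (\<lambda>z y. V z t)) \<Longrightarrow> affine_expr I J c"
  by (auto simp: poly_cons_def intro!: affine_expr_diff affine_expr_inner_left affine_expr_const)

lemma one_hot_select:
  fixes y :: "'j \<Rightarrow> real" and z :: "'i \<Rightarrow> real"
  assumes "\<forall>c\<in>eq_cons (\<lambda>z y. (\<Sum>s\<in>S. y (v s)) - 1). c z y \<le> 0" "\<forall>s\<in>S. y (v s) = 0 \<or> y (v s) = 1"
  obtains s where "s \<in> S" "y (v s) = 1"
proof -
  have "(\<Sum>s\<in>S. y (v s)) = 1"
    using assms(1) unfolding eq_cons_iff by simp
  then have "\<not> (\<forall>s\<in>S. y (v s) = 0)"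
    by (metis sum.neutral zero_neq_one)
  then show ?thesis
    using assms(2) that by blast
qed

lemma Ints_between_0_1: "x \<in> \<int> \<Longrightarrow> 0 \<le> x \<Longrightarrow> x \<le> (1::real) \<Longrightarrow> x = 0 \<or> x = 1"
  by (elim Ints_cases) auto

section \<open>Optimality conditions for piecewise quadratic programs\<close>

lemma convex_hull_image_finite:
  fixes f :: "'j \<Rightarrow> 'a::real_vector"
  assumes "finite A" "x \<in> convex hull (f ` A)"
  shows "\<exists>\<mu>. (\<forall>j\<in>A. 0 \<le> \<mu> j) \<and> sum \<mu> A = 1 \<and> x = (\<Sum>j\<in>A. \<mu> j *\<^sub>R f j)"
proof -
  let ?R = "{y. \<exists>\<mu>. (\<forall>j\<in>A. 0 \<le> \<mu> j) \<and> sum \<mu> A = 1 \<and> y = (\<Sum>j\<in>A. \<mu> j *\<^sub>R f j)}"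
  have "f j \<in> ?R" if "j \<in> A" for j
  proof -
    have "(\<Sum>j'\<in>A. of_bool (j' = j) *\<^sub>R f j') = f j" "sum (\<lambda>j'. of_bool (j' = j)) A = 1"
      using that assms(1) by (simp_all add: of_bool_def if_distrib[of "\<lambda>c. c *\<^sub>R _"] sum.delta cong: if_cong)
    then show ?thesis
      by (intro CollectI exI[of _ "\<lambda>j'. of_bool (j' = j)"]) simp
  qed
  moreover have "convex ?R"
    unfolding convex_def
  proof (intro ballI allI impI)
    fix y1 y2 and u v :: real
    assume "y1 \<in> ?R" "y2 \<in> ?R" and uv: "0 \<le> u" "0 \<le> v" "u + v = 1"
    then obtain m1 m2 where m1: "\<forall>j\<in>A. 0 \<le> m1 j" "sum m1 A = 1" "y1 = (\<Sum>j\<in>A. m1 j *\<^sub>R f j)"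
      and m2: "\<forall>j\<in>A. 0 \<le> m2 j" "sum m2 A = 1" "y2 = (\<Sum>j\<in>A. m2 j *\<^sub>R f j)"
      by auto
    have "sum (\<lambda>j. u * m1 j + v * m2 j) A = 1"
      using m1 m2 uv by (simp add: sum.distrib sum_distrib_left[symmetric])
    moreover have "u *\<^sub>R y1 + v *\<^sub>R y2 = (\<Sum>j\<in>A. (u * m1 j + v * m2 j) *\<^sub>R f j)"
      unfolding m1(3) m2(3) scaleR_sum_right by (simp add: scaleR_add_left sum.distrib)
    ultimately show "u *\<^sub>R y1 + v *\<^sub>R y2 \<in> ?R"
      using m1 m2 uv by (intro CollectI exI[of _ "\<lambda>j. u * m1 j + v * m2 j"]) simp
  qed
  ultimately have "convex hull (f ` A) \<subseteq> ?R"
    by (intro hull_minimal) auto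
  then show ?thesis
    using assms(2) by blast
qed

lemma Min_le_convex_combination:
  fixes g :: "'j \<Rightarrow> real"
  assumes "finite A" "A \<noteq> {}" "\<forall>j\<in>A. 0 \<le> \<mu> j" "sum \<mu> A = 1"
  shows "Min (g ` A) \<le> (\<Sum>j\<in>A. \<mu> j * g j)"
proof -
  have "(\<Sum>j\<in>A. \<mu> j * Min (g ` A)) \<le> (\<Sum>j\<in>A. \<mu> j * g j)"
    using assms by (intro sum_mono mult_left_mono) auto
  moreover have "(\<Sum>j\<in>A. \<mu> j * Min (g ` A)) = Min (g ` A)"
    using assms(4) by (simp add: sum_distrib_right[symmetric])
  ultimately show ?thesis
    by simp
qed

lemma eventually_at_right_0_mult_less:
  fixes x g :: real
  assumes "0 < g"
  shows "\<forall>\<^sub>F e in at_right 0. e * x < g"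
proof -
  have "((\<lambda>e. e * x) \<longlongrightarrow> 0 * x) (at_right 0)"
    by (intro tendsto_intros)
  then show ?thesis
    using assms order_tendstoD(2) by fastforce
qed

primrec hull_sum :: "(nat \<Rightarrow> nat \<Rightarrow> 'a::real_vector) \<Rightarrow> (nat \<Rightarrow> nat set) \<Rightarrow> nat \<Rightarrow> 'a set" where
  "hull_sum Fv A 0 = {0}"
| "hull_sum Fv A (Suc i) = (\<Union>x\<in>hull_sum Fv A i. \<Union>y\<in>convex hull (Fv i ` A i). {x + y})"

lemma compact_convex_hull_sum:
  fixes Fv :: "nat \<Rightarrow> nat \<Rightarrow> 'a::euclidean_space"
  assumes "\<forall>i<n. finite (A i)"
  shows "compact (hull_sum Fv A n) \<and> convex (hull_sum Fv A n)"
  using assms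
proof (induction n)
  case (Suc n)
  then have "compact (convex hull (Fv n ` A n))" "convex (convex hull (Fv n ` A n))"
    by (auto intro: finite_imp_compact_convex_hull)
  with Suc show ?case
    using compact_sums'[of "hull_sum Fv A n"] convex_sums[of "hull_sum Fv A n"] by auto
qed simp

lemma mem_hull_sum_imp_weights:
  assumes "\<forall>i<n. finite (A i)" "x \<in> hull_sum Fv A n"
  shows "\<exists>\<mu>. (\<forall>i<n. (\<forall>j\<in>A i. 0 \<le> \<mu> i j) \<and> sum (\<mu> i) (A i) = 1) \<and> x = (\<Sum>i<n. \<Sum>j\<in>A i. \<mu> i j *\<^sub>R Fv i j)"
  using assms
proof (induction n arbitrary: x)
  case (Suc n)
  from Suc.prems(2) obtain x' y where xy: "x' \<in> hull_sum Fv A n" "y \<in> convex hull (Fv n ` A n)" "x = x' + y"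
    by auto
  from Suc.IH[OF _ xy(1)] Suc.prems(1) obtain \<mu> where \<mu>:
    "\<forall>i<n. (\<forall>j\<in>A i. 0 \<le> \<mu> i j) \<and> sum (\<mu> i) (A i) = 1" "x' = (\<Sum>i<n. \<Sum>j\<in>A i. \<mu> i j *\<^sub>R Fv i j)"
    by auto
  from convex_hull_image_finite[OF _ xy(2)] Suc.prems(1) obtain \<nu> where \<nu>:
    "\<forall>j\<in>A n. 0 \<le> \<nu> j" "sum \<nu> (A n) = 1" "y = (\<Sum>j\<in>A n. \<nu> j *\<^sub>R Fv n j)"
    by auto
  define \<mu>' where "\<mu>' = \<mu>(n := \<nu>)"
  have "(\<Sum>i<n. \<Sum>j\<in>A i. \<mu>' i j *\<^sub>R Fv i j) = x'"
    unfolding \<mu>(2) by (intro sum.cong) (auto simp: \<mu>'_def)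
  then have "x = (\<Sum>i<Suc n. \<Sum>j\<in>A i. \<mu>' i j *\<^sub>R Fv i j)"
    using xy(3) \<nu>(3) by (simp add: \<mu>'_def)
  moreover have "\<forall>i<Suc n. (\<forall>j\<in>A i. 0 \<le> \<mu>' i j) \<and> sum (\<mu>' i) (A i) = 1"
    using \<mu>(1) \<nu>(1,2) by (auto simp: \<mu>'_def less_Suc_eq)
  ultimately show ?case
    by blast
qed simp

lemma sum_mem_hull_sum:
  assumes "\<forall>i<n. sel i \<in> A i"
  shows "(\<Sum>i<n. Fv i (sel i)) \<in> hull_sum Fv A n"
  using assms
proof (induction n)
  case (Suc n)
  then have "(\<Sum>i<n. Fv i (sel i)) \<in> hull_sum Fv A n" "Fv n (sel n) \<in> convex hull (Fv n ` A n)"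
    by (auto intro: hull_inc)
  then show ?case
    by force
qed simp

text \<open>Maximisation of \<open>\<phi> = S + (\<Sum>i<K. min\<^sub>j\<^sub>\<in>\<^sub>J\<^sub>i aff i j)\<close> over \<open>{v. \<forall>l<nL. a l \<bullet> v \<le> b l}\<close>, with \<open>S\<close>
  and the affine pieces expanded around the candidate maximiser \<open>v0\<close>.\<close>
locale piecewise_quadratic_program =
  fixes a :: "nat \<Rightarrow> 'a::euclidean_space" and b :: "nat \<Rightarrow> real" and nL :: nat
    and \<phi> S qd :: "'a \<Rightarrow> real" and c v0 :: 'a
    and Fv :: "nat \<Rightarrow> nat \<Rightarrow> 'a" and aff :: "nat \<Rightarrow> nat \<Rightarrow> 'a \<Rightarrow> real"
    and K :: nat and J :: "nat \<Rightarrow> nat set"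
  assumes objective: "\<phi> v = S v + (\<Sum>i<K. Min ((\<lambda>j. aff i j v) ` J i))"
    and pieces: "i < K \<Longrightarrow> finite (J i) \<and> J i \<noteq> {}"
    and aff_expand: "aff i j (v0 + d) = aff i j v0 + Fv i j \<bullet> d"
    and quad_expand: "S (v0 + d) = S v0 + c \<bullet> d - qd d"
    and qd_nonneg: "0 \<le> qd d"
    and qd_homogeneous: "qd (e *\<^sub>R d) = e\<^sup>2 * qd d"
begin

definition feasible :: "'a \<Rightarrow> bool" where
  "feasible v \<longleftrightarrow> (\<forall>l<nL. a l \<bullet> v \<le> b l)"

definition kkt_certificate :: "nat set \<Rightarrow> (nat \<Rightarrow> nat \<Rightarrow> real) \<Rightarrow> bool" where
  "kkt_certificate P \<mu> \<longleftrightarrow> P \<subseteq> {..<nL} \<and> (\<forall>l\<in>P. a l \<bullet> v0 = b l) \<and>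
     (\<forall>i<K. (\<forall>j\<in>J i. 0 \<le> \<mu> i j \<and> (0 < \<mu> i j \<longrightarrow> (\<forall>j'\<in>J i. aff i j v0 \<le> aff i j' v0)))
            \<and> sum (\<mu> i) (J i) = 1) \<and>
     c + (\<Sum>i<K. \<Sum>j\<in>J i. \<mu> i j *\<^sub>R Fv i j) \<in> convex_cone hull (a ` P)"

lemma Min_piece_le_weighted:
  assumes i: "i < K" and \<mu>: "\<forall>j\<in>J i. 0 \<le> \<mu> j \<and> (0 < \<mu> j \<longrightarrow> (\<forall>j'\<in>J i. aff i j v0 \<le> aff i j' v0))"
    "sum \<mu> (J i) = 1"
  shows "Min ((\<lambda>j. aff i j (v0 + d)) ` J i) \<le> Min ((\<lambda>j. aff i j v0) ` J i) + (\<Sum>j\<in>J i. \<mu> j * (Fv i j \<bullet> d))"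
proof -
  let ?m = "Min ((\<lambda>j. aff i j v0) ` J i)"
  have J: "finite (J i)" "J i \<noteq> {}"
    using pieces[OF i] by auto
  have "\<mu> j * aff i j v0 = \<mu> j * ?m" if j: "j \<in> J i" for j
  proof (cases "\<mu> j = 0")
    case False
    then have "\<forall>j'\<in>J i. aff i j v0 \<le> aff i j' v0"
      using \<mu>(1) j by force
    then have "aff i j v0 = ?m"
      using J j by (intro antisym Min_le) (auto simp: Min_ge_iff)
    then show ?thesis
      by simp
  qed simp
  then have "(\<Sum>j\<in>J i. \<mu> j * aff i j (v0 + d)) = (\<Sum>j\<in>J i. \<mu> j * ?m + \<mu> j * (Fv i j \<bullet> d))"
    unfolding aff_expand by (intro sum.cong) (auto simp: distrib_left)
  also have "\<dots> = ?m + (\<Sum>j\<in>J i. \<mu> j * (Fv i j \<bullet> d))"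
    using \<mu>(2) by (simp add: sum.distrib sum_distrib_right[symmetric])
  finally show ?thesis
    using Min_le_convex_combination[OF J, of \<mu> "\<lambda>j. aff i j (v0 + d)"] \<mu> by simp
qed

lemma kkt_certificate_imp_le:
  assumes "kkt_certificate P \<mu>" "feasible v"
  shows "\<phi> v \<le> \<phi> v0"
proof -
  define d where "d = v - v0"
  have v: "v = v0 + d"
    by (simp add: d_def)
  have "convex_cone {x. x \<bullet> d \<le> 0}"
    unfolding convex_cone_iff by (auto simp: inner_add_left mult_nonneg_nonpos)
  moreover have "a ` P \<subseteq> {x. x \<bullet> d \<le> 0}"
    using assms unfolding kkt_certificate_def feasible_def by (auto simp: d_def inner_diff_right)
  ultimately have "convex_cone hull (a ` P) \<subseteq> {x. x \<bullet> d \<le> 0}"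
    by (rule_tac hull_minimal)
  then have dual: "c \<bullet> d + (\<Sum>i<K. \<Sum>j\<in>J i. \<mu> i j * (Fv i j \<bullet> d)) \<le> 0"
    using assms(1) unfolding kkt_certificate_def by (auto simp: inner_add_left inner_sum_left)
  have "(\<Sum>i<K. Min ((\<lambda>j. aff i j v) ` J i))
      \<le> (\<Sum>i<K. Min ((\<lambda>j. aff i j v0) ` J i)) + (\<Sum>i<K. \<Sum>j\<in>J i. \<mu> i j * (Fv i j \<bullet> d))"
    unfolding sum.distrib[symmetric] v using assms(1) Min_piece_le_weighted
    by (intro sum_mono) (simp add: kkt_certificate_def)
  then show ?thesis
    using dual qd_nonneg[of d] quad_expand[of d] objective[of v] objective[of v0] unfolding v
    by linarith
qed

definition active_set :: "nat set" where
  "active_set = {l. l < nL \<and> a l \<bullet> v0 = b l}"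

definition minimizers :: "nat \<Rightarrow> nat set" where
  "minimizers i = {j \<in> J i. \<forall>j'\<in>J i. aff i j v0 \<le> aff i j' v0}"

lemma minimizers_subset: "minimizers i \<subseteq> J i"
  by (auto simp: minimizers_def)

lemma finite_minimizers: "i < K \<Longrightarrow> finite (minimizers i)"
  using pieces minimizers_subset finite_subset by blast

lemma minimizers_nonempty: "i < K \<Longrightarrow> minimizers i \<noteq> {}"
proof -
  assume i: "i < K"
  have "Min ((\<lambda>j. aff i j v0) ` J i) \<in> (\<lambda>j. aff i j v0) ` J i"
    using pieces[OF i] by (intro Min_in) auto
  then obtain j where "j \<in> J i" "aff i j v0 = Min ((\<lambda>j. aff i j v0) ` J i)"
    by auto
  then have "j \<in> minimizers i"
    using pieces[OF i] by (auto simp: minimizers_def)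
  then show ?thesis
    by blast
qed

lemma aff_minimizer: "i < K \<Longrightarrow> j \<in> minimizers i \<Longrightarrow> aff i j v0 = Min ((\<lambda>j. aff i j v0) ` J i)"
  using pieces[of i] by (intro antisym Min_le) (auto simp: minimizers_def Min_ge_iff)

lemma aff_non_minimizer:
  "i < K \<Longrightarrow> j \<in> J i \<Longrightarrow> j \<notin> minimizers i \<Longrightarrow> Min ((\<lambda>j. aff i j v0) ` J i) < aff i j v0"
  using pieces[of i] by (auto simp: minimizers_def not_le intro: le_less_trans[OF Min_le])

definition dual_set :: "'a set" where
  "dual_set = (\<Union>k\<in>convex_cone hull (a ` active_set). \<Union>t\<in>hull_sum Fv minimizers K. {k - t})"

lemma closed_convex_dual_set: "closed dual_set \<and> convex dual_set"
proof -
  have "finite active_set"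
    by (auto simp: active_set_def)
  then have "closed (convex_cone hull (a ` active_set))" "convex (convex_cone hull (a ` active_set))"
    by (auto intro: polyhedron_imp_closed polyhedron_convex_cone_hull convex_convex_cone_hull)
  moreover have "compact (hull_sum Fv minimizers K)" "convex (hull_sum Fv minimizers K)"
    using compact_convex_hull_sum finite_minimizers by blast+
  ultimately show ?thesis
    unfolding dual_set_def by (auto intro: closed_compact_differences convex_differences)
qed

lemma mem_dual_set_imp_certificate:
  assumes "c \<in> dual_set"
  shows "\<exists>\<mu>. kkt_certificate active_set \<mu>"
proof -
  obtain k t where kt: "k \<in> convex_cone hull (a ` active_set)" "t \<in> hull_sum Fv minimizers K" "c = k - t"
    using assms by (auto simp: dual_set_def)
  then obtain \<mu> where \<mu>: "\<forall>i<K. (\<forall>j\<in>minimizers i. 0 \<le> \<mu> i j) \<and> sum (\<mu> i) (minimizers i) = 1"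
    "t = (\<Sum>i<K. \<Sum>j\<in>minimizers i. \<mu> i j *\<^sub>R Fv i j)"
    using mem_hull_sum_imp_weights finite_minimizers by blast
  define \<mu>' where "\<mu>' i j = (if j \<in> minimizers i then \<mu> i j else 0)" for i j
  have restrict: "(\<Sum>j\<in>J i. \<mu>' i j *\<^sub>R x j) = (\<Sum>j\<in>minimizers i. \<mu> i j *\<^sub>R x j)"
    "sum (\<mu>' i) (J i) = sum (\<mu> i) (minimizers i)" if "i < K" for i and x :: "nat \<Rightarrow> 'a"
    using pieces[OF that] minimizers_subset[of i]
    by (simp_all add: \<mu>'_def if_distrib[of "\<lambda>r. r *\<^sub>R _"] sum.inter_restrict[symmetric] Int_absorb1 cong: if_cong)
  have "kkt_certificate active_set \<mu>'"
    unfolding kkt_certificate_def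
  proof (intro conjI)
    show "c + (\<Sum>i<K. \<Sum>j\<in>J i. \<mu>' i j *\<^sub>R Fv i j) \<in> convex_cone hull (a ` active_set)"
      using kt \<mu>(2) restrict(1) by simp
    show "\<forall>i<K. (\<forall>j\<in>J i. 0 \<le> \<mu>' i j \<and> (0 < \<mu>' i j \<longrightarrow> (\<forall>j'\<in>J i. aff i j v0 \<le> aff i j' v0)))
        \<and> sum (\<mu>' i) (J i) = 1"
      using \<mu>(1) restrict(2) by (auto simp: \<mu>'_def minimizers_def)
  qed (auto simp: active_set_def)
  then show ?thesis
    by blast
qed

lemma ex_minimizing_selection:
  "\<exists>sel. \<forall>i<K. sel i \<in> minimizers i \<and> (\<forall>j\<in>minimizers i. Fv i (sel i) \<bullet> d \<le> Fv i j \<bullet> d)"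
proof -
  have "\<exists>j. i < K \<longrightarrow> j \<in> minimizers i \<and> (\<forall>j'\<in>minimizers i. Fv i j \<bullet> d \<le> Fv i j' \<bullet> d)" for i
  proof (cases "i < K")
    case True
    have "Min ((\<lambda>j. Fv i j \<bullet> d) ` minimizers i) \<in> (\<lambda>j. Fv i j \<bullet> d) ` minimizers i"
      using True finite_minimizers minimizers_nonempty by (intro Min_in) auto
    then obtain j where "j \<in> minimizers i" "Fv i j \<bullet> d = Min ((\<lambda>j. Fv i j \<bullet> d) ` minimizers i)"
      by auto
    then show ?thesis
      using True finite_minimizers by auto
  qed simp
  then show ?thesis
    by metis
qed

lemma separation_nonneg_on_cone:
  assumes "\<forall>x\<in>dual_set. b0 < a0 \<bullet> x" "t0 \<in> hull_sum Fv minimizers K"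
    and g: "g \<in> convex_cone hull (a ` active_set)"
  shows "0 \<le> a0 \<bullet> g"
proof (rule ccontr)
  assume "\<not> 0 \<le> a0 \<bullet> g"
  define s where "s = (\<bar>a0 \<bullet> t0\<bar> + \<bar>b0\<bar> + 1) / - (a0 \<bullet> g)"
  have "0 \<le> s" "s * (a0 \<bullet> g) = - (\<bar>a0 \<bullet> t0\<bar> + \<bar>b0\<bar> + 1)"
    using \<open>\<not> 0 \<le> a0 \<bullet> g\<close> by (auto simp: s_def divide_nonneg_neg)
  moreover from \<open>0 \<le> s\<close> have "s *\<^sub>R g \<in> convex_cone hull (a ` active_set)"
    using g conic_convex_cone_hull unfolding conic_def by blast
  then have "b0 < a0 \<bullet> (s *\<^sub>R g - t0)"
    using assms(1,2) by (auto simp: dual_set_def)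
  ultimately show False
    by (simp add: inner_diff_right)
qed

text \<open>Farkas-type alternative: without a certificate, \<open>c\<close> lies outside the closed convex
  \<open>dual_set\<close>, and the normal of a separating hyperplane is an ascent direction.\<close>
lemma no_certificate_imp_ascent_direction:
  assumes "\<nexists>P \<mu>. kkt_certificate P \<mu>"
  obtains d sel where "\<forall>l\<in>active_set. a l \<bullet> d \<le> 0"
    and "\<forall>i<K. sel i \<in> minimizers i \<and> (\<forall>j\<in>minimizers i. Fv i (sel i) \<bullet> d \<le> Fv i j \<bullet> d)"
    and "0 < c \<bullet> d + (\<Sum>i<K. Fv i (sel i) \<bullet> d)"
proof -
  have "c \<notin> dual_set"
    using assms mem_dual_set_imp_certificate by blast
  then obtain a0 b0 where sep: "a0 \<bullet> c < b0" "\<forall>x\<in>dual_set. b0 < a0 \<bullet> x"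
    using separating_hyperplane_closed_point closed_convex_dual_set by blast
  obtain sel where sel: "\<forall>i<K. sel i \<in> minimizers i \<and> (\<forall>j\<in>minimizers i. Fv i (sel i) \<bullet> - a0 \<le> Fv i j \<bullet> - a0)"
    using ex_minimizing_selection by blast
  define t0 where "t0 = (\<Sum>i<K. Fv i (sel i))"
  have t0: "t0 \<in> hull_sum Fv minimizers K"
    unfolding t0_def using sel by (intro sum_mem_hull_sum) auto
  have "a l \<bullet> - a0 \<le> 0" if "l \<in> active_set" for l
    using separation_nonneg_on_cone[OF sep(2) t0, of "a l"] that by (simp add: inner_commute hull_inc)
  moreover have "0 < c \<bullet> - a0 + (\<Sum>i<K. Fv i (sel i) \<bullet> - a0)"
  proof -
    have "0 - t0 \<in> dual_set"
      unfolding dual_set_def using convex_cone_hull_contains_0 t0 by blast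
    then have "b0 < - (a0 \<bullet> t0)"
      using sep(2) by fastforce
    then show ?thesis
      using sep(1) by (simp add: t0_def inner_sum_left inner_sum_right inner_commute sum_negf)
  qed
  ultimately show ?thesis
    using sel that by blast
qed

definition admissible_step :: "'a \<Rightarrow> (nat \<Rightarrow> nat) \<Rightarrow> real \<Rightarrow> bool" where
  "admissible_step d sel e \<longleftrightarrow> 0 < e \<and>
     (\<forall>l\<in>{..<nL} - active_set. e * (a l \<bullet> d) < b l - a l \<bullet> v0) \<and>
     (\<forall>i\<in>{..<K}. \<forall>j\<in>J i - minimizers i.
        e * (\<bar>Fv i j \<bullet> d\<bar> + \<bar>Fv i (sel i) \<bullet> d\<bar>) < aff i j v0 - Min ((\<lambda>j. aff i j v0) ` J i)) \<and>
     e * qd d < c \<bullet> d + (\<Sum>i<K. Fv i (sel i) \<bullet> d)"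

lemma ex_admissible_step:
  assumes "feasible v0" "0 < c \<bullet> d + (\<Sum>i<K. Fv i (sel i) \<bullet> d)"
  shows "\<exists>e. admissible_step d sel e"
proof -
  have "\<forall>\<^sub>F e in at_right 0. admissible_step d sel e"
    unfolding admissible_step_def
  proof (intro eventually_conj eventually_ball_finite ballI)
    show "\<forall>\<^sub>F e in at_right 0. (0::real) < e"
      by (rule eventually_at_right_less)
    fix l assume "l \<in> {..<nL} - active_set"
    then have "0 < b l - a l \<bullet> v0"
      using assms(1) by (auto simp: feasible_def active_set_def)
    then show "\<forall>\<^sub>F e in at_right 0. e * (a l \<bullet> d) < b l - a l \<bullet> v0"
      by (rule eventually_at_right_0_mult_less)
  next
    fix i j assume "i \<in> {..<K}" "j \<in> J i - minimizers i"
    then have "0 < aff i j v0 - Min ((\<lambda>j. aff i j v0) ` J i)"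
      using aff_non_minimizer by auto
    then show "\<forall>\<^sub>F e in at_right 0.
        e * (\<bar>Fv i j \<bullet> d\<bar> + \<bar>Fv i (sel i) \<bullet> d\<bar>) < aff i j v0 - Min ((\<lambda>j. aff i j v0) ` J i)"
      by (rule eventually_at_right_0_mult_less)
  qed (use assms(2) pieces in \<open>auto intro: eventually_at_right_0_mult_less\<close>)
  then show ?thesis
    using eventually_happens[of _ "at_right (0::real)"] by auto
qed

lemma admissible_step_feasible:
  assumes "feasible v0" "\<forall>l\<in>active_set. a l \<bullet> d \<le> 0" "admissible_step d sel e"
  shows "feasible (v0 + e *\<^sub>R d)"
proof -
  have "a l \<bullet> (v0 + e *\<^sub>R d) \<le> b l" if "l < nL" for l
  proof (cases "l \<in> active_set")
    case True
    then show ?thesis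
      using assms(2,3) by (simp add: admissible_step_def inner_add_right active_set_def mult_nonneg_nonpos)
  next
    case False
    then show ?thesis
      using assms(3) that by (force simp: admissible_step_def inner_add_right)
  qed
  then show ?thesis
    by (simp add: feasible_def)
qed

lemma admissible_step_piece:
  assumes sel: "\<forall>i<K. sel i \<in> minimizers i \<and> (\<forall>j\<in>minimizers i. Fv i (sel i) \<bullet> d \<le> Fv i j \<bullet> d)"
    and e: "admissible_step d sel e" and i: "i < K"
  shows "Min ((\<lambda>j. aff i j v0) ` J i) + e * (Fv i (sel i) \<bullet> d) \<le> Min ((\<lambda>j. aff i j (v0 + e *\<^sub>R d)) ` J i)"
proof -
  let ?m = "Min ((\<lambda>j. aff i j v0) ` J i)"
  have "?m + e * (Fv i (sel i) \<bullet> d) \<le> aff i j (v0 + e *\<^sub>R d)" if j: "j \<in> J i" for j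
  proof (cases "j \<in> minimizers i")
    case True
    then have "e * (Fv i (sel i) \<bullet> d) \<le> e * (Fv i j \<bullet> d)"
      using sel i e by (intro mult_left_mono) (auto simp: admissible_step_def)
    then show ?thesis
      using aff_minimizer[OF i True] by (simp add: aff_expand)
  next
    case False
    then have "e * (\<bar>Fv i j \<bullet> d\<bar> + \<bar>Fv i (sel i) \<bullet> d\<bar>) < aff i j v0 - ?m"
      using e i j by (auto simp: admissible_step_def)
    moreover have "e * - \<bar>Fv i j \<bullet> d\<bar> \<le> e * (Fv i j \<bullet> d)" "e * (Fv i (sel i) \<bullet> d) \<le> e * \<bar>Fv i (sel i) \<bullet> d\<bar>"
      using e by (intro mult_left_mono; simp add: admissible_step_def)+
    ultimately show ?thesis
      by (simp add: aff_expand distrib_left)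
  qed
  then show ?thesis
    using pieces[OF i] by (simp add: Min_ge_iff)
qed

lemma admissible_step_improves:
  assumes "\<forall>i<K. sel i \<in> minimizers i \<and> (\<forall>j\<in>minimizers i. Fv i (sel i) \<bullet> d \<le> Fv i j \<bullet> d)"
    and e: "admissible_step d sel e"
  shows "\<phi> v0 < \<phi> (v0 + e *\<^sub>R d)"
proof -
  let ?v = "v0 + e *\<^sub>R d" and ?\<gamma> = "c \<bullet> d + (\<Sum>i<K. Fv i (sel i) \<bullet> d)"
  have "(\<Sum>i<K. Min ((\<lambda>j. aff i j v0) ` J i) + e * (Fv i (sel i) \<bullet> d)) \<le> (\<Sum>i<K. Min ((\<lambda>j. aff i j ?v) ` J i))"
    using admissible_step_piece[OF assms] by (intro sum_mono) simp
  then have "(\<Sum>i<K. Min ((\<lambda>j. aff i j v0) ` J i)) + e * (\<Sum>i<K. Fv i (sel i) \<bullet> d)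
      \<le> (\<Sum>i<K. Min ((\<lambda>j. aff i j ?v) ` J i))"
    by (simp add: sum.distrib sum_distrib_left)
  moreover have "S ?v = S v0 + e * (c \<bullet> d) - e\<^sup>2 * qd d"
    by (simp add: quad_expand qd_homogeneous)
  ultimately have "\<phi> v0 + e * (?\<gamma> - e * qd d) \<le> \<phi> ?v"
    by (simp add: objective[of ?v] objective[of v0] algebra_simps power2_eq_square)
  moreover have "0 < e * (?\<gamma> - e * qd d)"
    using e by (simp add: admissible_step_def)
  ultimately show ?thesis
    by linarith
qed

theorem max_iff_kkt_certificate:
  assumes "feasible v0"
  shows "(\<forall>v. feasible v \<longrightarrow> \<phi> v \<le> \<phi> v0) \<longleftrightarrow> (\<exists>P \<mu>. kkt_certificate P \<mu>)"
proof
  assume max: "\<forall>v. feasible v \<longrightarrow> \<phi> v \<le> \<phi> v0"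
  show "\<exists>P \<mu>. kkt_certificate P \<mu>"
  proof (rule ccontr)
    assume "\<nexists>P \<mu>. kkt_certificate P \<mu>"
    then obtain d sel where "\<forall>l\<in>active_set. a l \<bullet> d \<le> 0"
      "\<forall>i<K. sel i \<in> minimizers i \<and> (\<forall>j\<in>minimizers i. Fv i (sel i) \<bullet> d \<le> Fv i j \<bullet> d)"
      "0 < c \<bullet> d + (\<Sum>i<K. Fv i (sel i) \<bullet> d)"
      by (rule no_certificate_imp_ascent_direction)
    moreover from this obtain e where "admissible_step d sel e"
      using ex_admissible_step[OF assms] by blast
    ultimately have "feasible (v0 + e *\<^sub>R d)" "\<phi> v0 < \<phi> (v0 + e *\<^sub>R d)"
      using admissible_step_feasible[OF assms] admissible_step_improves by blast+
    with max show False
      by (simp add: not_le[symmetric])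
  qed
next
  assume "\<exists>P \<mu>. kkt_certificate P \<mu>"
  then show "\<forall>v. feasible v \<longrightarrow> \<phi> v \<le> \<phi> v0"
    using kkt_certificate_imp_le by blast
qed

end

section \<open>The maximum likelihood problem as a mixed-integer linear program\<close>

type_synonym ('x, 'th, 'u) coords = "(nat \<times> ('x + 'th + 'u)) option \<Rightarrow> real"

text \<open>Auxiliary variables: the real and integer variables of the MILP descriptions of the two
  log-likelihood hypographs and the log-likelihood values at each measurement; at each stage \<open>t\<close>,
  the binaries choosing the region of \<open>g\<close>, the active set of \<open>\<U>\<close> and the support of the KKT
  weights, and the KKT weights themselves.\<close>
datatype aux_var =
    NuReal nat nat | NuInt nat nat | NuLog nat
  | OmReal nat nat | OmInt nat nat | OmLog nat
  | Region nat nat | Active nat "nat set" | Supp nat nat nat | Weight nat nat nat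

type_synonym ('x, 'th, 'u) cons_expr = "('x, 'th, 'u) coords \<Rightarrow> (aux_var \<Rightarrow> real) \<Rightarrow> real"

definition state_of :: "('x::finite, 'th::finite, 'u::finite) coords \<Rightarrow> nat \<Rightarrow> real^'x" where
  "state_of z t = (\<chi> j. z (Some (t, Inl j)))"

definition motive_of :: "('x::finite, 'th::finite, 'u::finite) coords \<Rightarrow> nat \<Rightarrow> real^'th" where
  "motive_of z t = (\<chi> j. z (Some (t, Inr (Inl j))))"

definition decision_of :: "('x::finite, 'th::finite, 'u::finite) coords \<Rightarrow> nat \<Rightarrow> real^'u" where
  "decision_of z t = (\<chi> j. z (Some (t, Inr (Inr j))))"

lemma mem_enc_idx [simp]:
  "None \<in> enc_idx N"
  "Some (t, Inl j) \<in> enc_idx N \<longleftrightarrow> t \<le> N"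
  "Some (t, Inr (Inl j')) \<in> enc_idx N \<longleftrightarrow> t \<le> N"
  "Some (t, Inr (Inr j'')) \<in> enc_idx N \<longleftrightarrow> t < N"
  by (auto simp: enc_idx_def)

lemma finite_enc_idx [simp]: "finite (enc_idx N)"
proof -
  have "finite ({..N} \<times> range Inl \<union> {..N} \<times> range (Inr \<circ> Inl) \<union> {..<N} \<times> range (Inr \<circ> Inr)
          :: (nat \<times> ('x::finite + 'th::finite + 'u::finite)) set)"
    by (intro finite_UnI finite_cartesian_product) auto
  then show ?thesis
    by (simp add: enc_idx_def)
qed

lemma enc_outside_enc_idx: "i \<notin> enc_idx N \<Longrightarrow> enc N X \<Theta> U r i = 0"
  by (auto simp: enc_def enc_idx_def split: option.splits sum.splits)

lemma state_of_enc: "t \<le> N \<Longrightarrow> state_of (enc N X \<Theta> U r) t = X t"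
  by (simp add: state_of_def enc_def vec_eq_iff)

lemma motive_of_enc: "t \<le> N \<Longrightarrow> motive_of (enc N X \<Theta> U r) t = \<Theta> t"
  by (simp add: motive_of_def enc_def vec_eq_iff)

lemma decision_of_enc: "t < N \<Longrightarrow> decision_of (enc N X \<Theta> U r) t = U t"
  by (simp add: decision_of_def enc_def vec_eq_iff)

lemma enc_None [simp]: "enc N X \<Theta> U r None = r"
  by (simp add: enc_def)

lemma enc_decode:
  assumes "\<forall>i. i \<notin> enc_idx N \<longrightarrow> z i = 0"
  shows "z = enc N (state_of z) (motive_of z) (decision_of z) (z None)"
proof
  fix i
  show "z i = enc N (state_of z) (motive_of z) (decision_of z) (z None) i"
  proof (cases "i \<in> enc_idx N")
    case True
    then show ?thesis
      by (auto simp: enc_def enc_idx_def state_of_def motive_of_def decision_of_def split: option.splits sum.splits)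
  qed (use assms enc_outside_enc_idx in metis)
qed

lemma affine_vexpr_state_of: "finite I \<Longrightarrow> (\<And>j. Some (t, Inl j) \<in> I) \<Longrightarrow> affine_vexpr I J (\<lambda>z y. state_of z t)"
  unfolding state_of_def by (intro affine_vexpr_lambda affine_expr_var)

lemma affine_vexpr_motive_of: "finite I \<Longrightarrow> (\<And>j. Some (t, Inr (Inl j)) \<in> I) \<Longrightarrow> affine_vexpr I J (\<lambda>z y. motive_of z t)"
  unfolding motive_of_def by (intro affine_vexpr_lambda affine_expr_var)

lemma affine_vexpr_decision_of: "finite I \<Longrightarrow> (\<And>j. Some (t, Inr (Inr j)) \<in> I) \<Longrightarrow> affine_vexpr I J (\<lambda>z y. decision_of z t)"
  unfolding decision_of_def by (intro affine_vexpr_lambda affine_expr_var)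

text \<open>Only part of (A1)--(A5) is needed: concavity in \<open>x\<close> and \<open>\<theta>\<close>, strict concavity in \<open>u\<close>,
  surjectivity of \<open>h\<close> and \<open>g\<close>, the noise moments and observability (A5) ensure well-posedness of
  the estimator, not its representability.\<close>
locale mle_problem =
  fixes Xs :: "(real^'x) set" and Us :: "(real^'u) set"
    and Ths :: "(real^'th) set" and Ps :: "(real^'p) set"
    and f :: "real^'x \<Rightarrow> real^'u \<Rightarrow> real^'th \<Rightarrow> real^'p \<Rightarrow> real"
    and h :: "real^'x \<Rightarrow> real^'u \<Rightarrow> real^'x"
    and g :: "real^'x \<Rightarrow> real^'u \<Rightarrow> real^'th \<Rightarrow> real^'p \<Rightarrow> real^'th"
    and Q :: "real^('x + 'u)^('x + 'u)" and H :: "real^('x + 'u)^('th + 'p)"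
    and K :: nat and J :: "nat \<Rightarrow> nat set"
    and F :: "nat \<Rightarrow> nat \<Rightarrow> real^('x + ('u + ('th + 'p)))" and \<zeta> :: "nat \<Rightarrow> nat \<Rightarrow> real"
    and A :: "real^'x^'x" and B :: "real^'u^'x" and k :: "real^'x"
    and Ng :: nat and G :: "nat \<Rightarrow> real^('x + ('u + ('th + 'p)))^'th" and chi :: "nat \<Rightarrow> real^'th"
    and mB :: "nat \<Rightarrow> nat" and Bm :: "nat \<Rightarrow> nat \<Rightarrow> real^('x + ('u + ('th + 'p)))"
    and \<psi> :: "nat \<Rightarrow> nat \<Rightarrow> real"
    and D :: "real^'x^'ox" and C :: "real^'u^'oy"
    and p\<nu> :: "real^'ox \<Rightarrow> real" and p\<omega> :: "real^'oy \<Rightarrow> real"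
    and N :: nat and \<pi> :: "nat \<Rightarrow> real^'p"
    and nx :: nat and nu :: nat and tx :: "nat \<Rightarrow> nat" and tu :: "nat \<Rightarrow> nat"
    and xt :: "nat \<Rightarrow> real^'ox" and yt :: "nat \<Rightarrow> real^'oy"
  assumes polyhedron_X: "polyhedron Xs" and bounded_X: "bounded Xs"
    and polyhedron_U: "polyhedron Us" and bounded_U: "bounded Us"
    and polyhedron_Th: "polyhedron Ths" and bounded_Th: "bounded Ths"
    and f_form: "\<And>x u \<theta> p. f x u \<theta> p =
        - (vcat x u \<bullet> (Q *v vcat x u)) + vcat \<theta> p \<bullet> (H *v vcat x u)
        + (\<Sum>i<K. Min ((\<lambda>j. F i j \<bullet> vcat x (vcat u (vcat \<theta> p)) + \<zeta> i j) ` J i))"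
    and pieces: "\<And>i. i < K \<Longrightarrow> finite (J i) \<and> J i \<noteq> {}"
    and Q_psd: "\<And>z. 0 \<le> z \<bullet> (Q *v z)"
    and h_affine: "\<And>x u. h x u = A *v x + B *v u + k"
    and g_region: "\<And>i x u \<theta> p. i < Ng \<Longrightarrow>
        (\<forall>r<mB i. Bm i r \<bullet> vcat x (vcat u (vcat \<theta> p)) \<le> \<psi> i r) \<Longrightarrow>
        g x u \<theta> p = G i *v vcat x (vcat u (vcat \<theta> p)) + chi i"
    and regions_cover: "\<And>x u \<theta> p. x \<in> Xs \<Longrightarrow> u \<in> Us \<Longrightarrow> \<theta> \<in> Ths \<Longrightarrow> p \<in> Ps \<Longrightarrow>
        \<exists>i<Ng. \<forall>r<mB i. Bm i r \<bullet> vcat x (vcat u (vcat \<theta> p)) \<le> \<psi> i r"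
    and log_p\<nu>: "hypo_milp (\<lambda>v. ln (p\<nu> v))" and log_p\<omega>: "hypo_milp (\<lambda>v. ln (p\<omega> v))"
    and incentives: "\<And>t. t < N \<Longrightarrow> \<pi> t \<in> Ps"
    and times_x: "\<And>i. i \<le> nx \<Longrightarrow> tx i \<le> N"
    and times_u: "\<And>j. j \<le> nu \<Longrightarrow> tu j < N"
begin

abbreviation "nU \<equiv> ineq_num Us"
abbreviation "aU \<equiv> ineq_normal Us"
abbreviation "bU \<equiv> ineq_rhs Us"

lemma mem_Us: "u \<in> Us \<longleftrightarrow> (\<forall>l<nU. aU l \<bullet> u \<le> bU l)"
  by (rule polyhedron_ineqs[OF polyhedron_U])

text \<open>As \<open>h\<close> is affine in \<open>u\<close> with matrix \<open>B\<close>, moving \<open>u\<close> by \<open>d\<close> moves \<open>(h x u, u)\<close> by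
  \<open>decision_shift d\<close>.\<close>
definition decision_shift :: "real^'u \<Rightarrow> real^('x + 'u)" where
  "decision_shift d = vcat (B *v d) d"

definition smooth_grad :: "real^'x \<Rightarrow> real^'u \<Rightarrow> real^'th \<Rightarrow> real^'p \<Rightarrow> real^'u" where
  "smooth_grad x' u \<theta> p = (\<chi> q. - (decision_shift (axis q 1) \<bullet> (Q *v vcat x' u) + vcat x' u \<bullet> (Q *v decision_shift (axis q 1)))
       + vcat \<theta> p \<bullet> (H *v decision_shift (axis q 1)))"

definition piece_grad :: "nat \<Rightarrow> nat \<Rightarrow> real^'u" where
  "piece_grad i j = (\<chi> q. F i j \<bullet> vcat (B *v axis q 1) (vcat (axis q 1) 0))"

definition piece_val :: "nat \<Rightarrow> nat \<Rightarrow> real^'x \<Rightarrow> real^'u \<Rightarrow> real^'th \<Rightarrow> real^'p \<Rightarrow> real" where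
  "piece_val i j x u \<theta> p = F i j \<bullet> vcat (h x u) (vcat u (vcat \<theta> p)) + \<zeta> i j"

definition decision_kkt :: "real^'x \<Rightarrow> real^'th \<Rightarrow> real^'p \<Rightarrow> real^'u \<Rightarrow> nat set \<Rightarrow> (nat \<Rightarrow> nat \<Rightarrow> real) \<Rightarrow> bool" where
  "decision_kkt x \<theta> p u P \<mu> \<longleftrightarrow> P \<subseteq> {..<nU} \<and> (\<forall>l\<in>P. aU l \<bullet> u = bU l) \<and>
     (\<forall>i<K. (\<forall>j\<in>J i. 0 \<le> \<mu> i j \<and> (0 < \<mu> i j \<longrightarrow> (\<forall>j'\<in>J i. piece_val i j x u \<theta> p \<le> piece_val i j' x u \<theta> p)))
            \<and> sum (\<mu> i) (J i) = 1) \<and>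
     smooth_grad (h x u) u \<theta> p + (\<Sum>i<K. \<Sum>j\<in>J i. \<mu> i j *\<^sub>R piece_grad i j) \<in> convex_cone hull (aU ` P)"

lemma h_shift: "h x (u + d) = h x u + B *v d"
  by (simp add: h_affine matrix_vector_right_distrib algebra_simps)

definition smooth_part :: "real^'x \<Rightarrow> real^'th \<Rightarrow> real^'p \<Rightarrow> real^'u \<Rightarrow> real" where
  "smooth_part x \<theta> p u = - (vcat (h x u) u \<bullet> (Q *v vcat (h x u) u)) + vcat \<theta> p \<bullet> (H *v vcat (h x u) u)"

definition shift_quad :: "real^'u \<Rightarrow> real" where
  "shift_quad d = decision_shift d \<bullet> (Q *v decision_shift d)"

lemma decision_shift_add: "decision_shift (d + d') = decision_shift d + decision_shift d'"
  by (simp add: decision_shift_def matrix_vector_right_distrib vcat_add)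

lemma decision_shift_scaleR: "decision_shift (e *\<^sub>R d) = e *\<^sub>R decision_shift d"
  by (simp add: decision_shift_def matrix_vector_mult_scaleR vcat_scaleR)

lemma shift_quad_scaleR: "shift_quad (e *\<^sub>R d) = e\<^sup>2 * shift_quad d"
  by (simp add: shift_quad_def decision_shift_scaleR matrix_vector_mult_scaleR power2_eq_square)

lemma smooth_part_expand:
  "smooth_part x \<theta> p (u + d) = smooth_part x \<theta> p u + smooth_grad (h x u) u \<theta> p \<bullet> d - shift_quad d"
proof -
  define w0 where "w0 = vcat (h x u) u"
  define lin where "lin d = - (decision_shift d \<bullet> (Q *v w0) + w0 \<bullet> (Q *v decision_shift d))
      + vcat \<theta> p \<bullet> (H *v decision_shift d)" for d
  have "linear lin"
    by (rule linearI) (simp_all add: lin_def decision_shift_add decision_shift_scaleR matrix_vector_right_distrib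
        matrix_vector_mult_scaleR inner_add_left inner_add_right algebra_simps)
  then have lin: "lin d = smooth_grad (h x u) u \<theta> p \<bullet> d"
    by (subst linear_eq_inner_axis) (simp_all add: smooth_grad_def lin_def w0_def)
  have "vcat (h x (u + d)) (u + d) = w0 + decision_shift d"
    unfolding h_shift w0_def decision_shift_def by (rule vcat_add)
  then have "smooth_part x \<theta> p (u + d) = smooth_part x \<theta> p u + lin d - shift_quad d"
    by (simp add: smooth_part_def lin_def shift_quad_def w0_def matrix_vector_right_distrib
        inner_add_left inner_add_right)
  then show ?thesis
    by (simp add: lin)
qed

lemma piece_val_expand: "piece_val i j x (u + d) \<theta> p = piece_val i j x u \<theta> p + piece_grad i j \<bullet> d"
proof -
  have "vcat (B *v (d1 + d2)) (vcat (d1 + d2) (0::real^('th + 'p))) = vcat (B *v d1) (vcat d1 0) + vcat (B *v d2) (vcat d2 0)"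
    "vcat (B *v (e *\<^sub>R d1)) (vcat (e *\<^sub>R d1) (0::real^('th + 'p))) = e *\<^sub>R vcat (B *v d1) (vcat d1 0)" for d1 d2 e
    by (metis add.right_neutral matrix_vector_right_distrib vcat_add,
        metis matrix_vector_mult_scaleR scaleR_zero_right vcat_scaleR)
  then have lin: "linear (\<lambda>d. F i j \<bullet> vcat (B *v d) (vcat d (0::real^('th + 'p))))"
    by (intro linearI) (simp_all add: inner_add_right)
  have "vcat (h x (u + d)) (vcat (u + d) (vcat \<theta> p)) = vcat (h x u) (vcat u (vcat \<theta> p)) + vcat (B *v d) (vcat d 0)"
    by (simp add: h_shift flip: vcat_add)
  then show ?thesis
    using linear_eq_inner_axis[OF lin, of d] by (simp add: piece_val_def piece_grad_def inner_add_right)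
qed

lemma decision_optimal_iff_kkt:
  assumes "u \<in> Us"
  shows "(\<forall>v\<in>Us. f (h x v) v \<theta> p \<le> f (h x u) u \<theta> p) \<longleftrightarrow> (\<exists>P \<mu>. decision_kkt x \<theta> p u P \<mu>)"
proof -
  interpret piecewise_quadratic_program aU bU nU "\<lambda>v. f (h x v) v \<theta> p" "smooth_part x \<theta> p" shift_quad
    "smooth_grad (h x u) u \<theta> p" u piece_grad "\<lambda>i j v. piece_val i j x v \<theta> p" K J
  proof unfold_locales
    show "f (h x v) v \<theta> p = smooth_part x \<theta> p v + (\<Sum>i<K. Min ((\<lambda>j. piece_val i j x v \<theta> p) ` J i))" for v
      by (simp add: f_form smooth_part_def piece_val_def)
    show "0 \<le> shift_quad d" for d
      by (simp add: shift_quad_def Q_psd)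
  qed (simp_all add: pieces smooth_part_expand piece_val_expand shift_quad_scaleR)
  have "feasible u"
    using assms by (simp add: mem_Us feasible_def)
  moreover have "(\<forall>v\<in>Us. f (h x v) v \<theta> p \<le> f (h x u) u \<theta> p) \<longleftrightarrow> (\<forall>v. feasible v \<longrightarrow> f (h x v) v \<theta> p \<le> f (h x u) u \<theta> p)"
    by (auto simp: mem_Us feasible_def)
  ultimately show ?thesis
    using max_iff_kkt_certificate unfolding kkt_certificate_def decision_kkt_def by simp
qed

abbreviation "M\<nu> \<equiv> hypo_system (\<lambda>v. ln (p\<nu> v))"
abbreviation "M\<omega> \<equiv> hypo_system (\<lambda>v. ln (p\<omega> v))"
abbreviation cone :: "nat set \<Rightarrow> (real^'u) set" where "cone P \<equiv> convex_cone hull (aU ` P)"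

definition stage_vec :: "('x, 'th, 'u) coords \<Rightarrow> nat \<Rightarrow> real^('x + ('u + ('th + 'p)))" where
  "stage_vec z t = vcat (state_of z t) (vcat (decision_of z t) (vcat (motive_of z t) (\<pi> t)))"

definition piece_at :: "('x, 'th, 'u) coords \<Rightarrow> nat \<Rightarrow> nat \<Rightarrow> nat \<Rightarrow> real" where
  "piece_at z t i j = piece_val i j (state_of z t) (decision_of z t) (motive_of z t) (\<pi> t)"

definition kkt_vec :: "('x, 'th, 'u) coords \<Rightarrow> (aux_var \<Rightarrow> real) \<Rightarrow> nat \<Rightarrow> real^'u" where
  "kkt_vec z y t = smooth_grad (h (state_of z t) (decision_of z t)) (decision_of z t) (motive_of z t) (\<pi> t)
     + (\<Sum>i<K. \<Sum>j\<in>J i. y (Weight t i j) *\<^sub>R piece_grad i j)"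

definition coord_vars :: "(nat \<times> ('x + 'th + 'u)) option set" where
  "coord_vars = enc_idx N - {None}"

definition binary_vars :: "aux_var set" where
  "binary_vars = (\<lambda>(t, i). Region t i) ` ({..<N} \<times> {..<Ng})
     \<union> (\<lambda>(t, P). Active t P) ` ({..<N} \<times> Pow {..<nU})
     \<union> (\<lambda>(t, i, j). Supp t i j) ` ({..<N} \<times> Sigma {..<K} J)"

definition bounded_vars :: "aux_var set" where
  "bounded_vars = binary_vars \<union> (\<lambda>(t, i, j). Weight t i j) ` ({..<N} \<times> Sigma {..<K} J)"

definition hypo_int_vars :: "aux_var set" where
  "hypo_int_vars = (\<lambda>(i, l). NuInt i l) ` ({..nx} \<times> {..<n_int M\<nu>}) \<union> (\<lambda>(i, l). OmInt i l) ` ({..nu} \<times> {..<n_int M\<omega>})"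

definition hypo_vars :: "aux_var set" where
  "hypo_vars = hypo_int_vars
     \<union> (\<lambda>(i, l). NuReal i l) ` ({..nx} \<times> {..<n_real M\<nu>}) \<union> NuLog ` {..nx}
     \<union> (\<lambda>(i, l). OmReal i l) ` ({..nu} \<times> {..<n_real M\<omega>}) \<union> OmLog ` {..nu}"

definition aux_vars :: "aux_var set" where
  "aux_vars = hypo_vars \<union> bounded_vars"

definition int_vars :: "aux_var set" where
  "int_vars = hypo_int_vars \<union> binary_vars"

text \<open>\<open>bound_R\<close> bounds every coordinate of a feasible point and every bounded auxiliary variable,
  so \<open>box_bound\<close> yields valid big-M constants.\<close>
definition bound_R :: real where
  "bound_R = max 1 (max (norm_bound Xs) (max (norm_bound Ths) (norm_bound Us)))"

definition enforce :: "aux_var \<Rightarrow> ('x, 'th, 'u) cons_expr \<Rightarrow> ('x, 'th, 'u) cons_expr" where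
  "enforce j e = big_M (box_bound coord_vars bounded_vars bound_R e) j e"

definition objective_cons :: "('x, 'th, 'u) cons_expr set" where
  "objective_cons = {\<lambda>z y. z None - (\<Sum>i\<le>nx. y (NuLog i)) - (\<Sum>j\<le>nu. y (OmLog j))}"

definition nu_cons :: "('x, 'th, 'u) cons_expr set" where
  "nu_cons = (\<lambda>(i, r) z y. mil_row UNIV M\<nu> r (hypo_point (xt i - D *v state_of z (tx i)) (y (NuLog i)))
      (\<lambda>l. y (NuReal i l)) (\<lambda>l. y (NuInt i l))) ` ({..nx} \<times> {..<n_cons M\<nu>})"

definition om_cons :: "('x, 'th, 'u) cons_expr set" where
  "om_cons = (\<lambda>(i, r) z y. mil_row UNIV M\<omega> r (hypo_point (yt i - C *v decision_of z (tu i)) (y (OmLog i)))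
      (\<lambda>l. y (OmReal i l)) (\<lambda>l. y (OmInt i l))) ` ({..nu} \<times> {..<n_cons M\<omega>})"

definition dynamics_cons :: "('x, 'th, 'u) cons_expr set" where
  "dynamics_cons = (\<Union>t<N. veq_cons (\<lambda>z y. state_of z (Suc t) - h (state_of z t) (decision_of z t)))"

definition domain_cons :: "('x, 'th, 'u) cons_expr set" where
  "domain_cons = poly_cons Xs state_of {..N} \<union> poly_cons Ths motive_of {..N} \<union> poly_cons Us decision_of {..<N}"

definition binary_cons :: "('x, 'th, 'u) cons_expr set" where
  "binary_cons = (\<lambda>j z y. - y j) ` bounded_vars \<union> (\<lambda>j z y. y j - 1) ` binary_vars"

definition region_select_cons :: "('x, 'th, 'u) cons_expr set" where
  "region_select_cons = (\<Union>t<N. eq_cons (\<lambda>z y. (\<Sum>i<Ng. y (Region t i)) - 1))"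

definition region_bound_cons :: "('x, 'th, 'u) cons_expr set" where
  "region_bound_cons =
     (\<Union>t<N. \<Union>i<Ng. \<Union>r<mB i. {enforce (Region t i) (\<lambda>z y. Bm i r \<bullet> stage_vec z t - \<psi> i r)})"

definition motive_update_cons :: "('x, 'th, 'u) cons_expr set" where
  "motive_update_cons = (\<Union>t<N. \<Union>i<Ng.
     enforce (Region t i) ` veq_cons (\<lambda>z y. motive_of z (Suc t) - (G i *v stage_vec z t + chi i)))"

definition region_cons :: "('x, 'th, 'u) cons_expr set" where
  "region_cons = region_select_cons \<union> region_bound_cons \<union> motive_update_cons"

definition active_select_cons :: "('x, 'th, 'u) cons_expr set" where
  "active_select_cons = (\<Union>t<N. eq_cons (\<lambda>z y. (\<Sum>P\<in>Pow {..<nU}. y (Active t P)) - 1))"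

definition active_tight_cons :: "('x, 'th, 'u) cons_expr set" where
  "active_tight_cons =
     (\<Union>t<N. \<Union>P\<in>Pow {..<nU}. \<Union>l\<in>P. {enforce (Active t P) (\<lambda>z y. bU l - aU l \<bullet> decision_of z t)})"

definition dual_cone_cons :: "('x, 'th, 'u) cons_expr set" where
  "dual_cone_cons = (\<Union>t<N. \<Union>P\<in>Pow {..<nU}. \<Union>r<ineq_num (cone P).
     {enforce (Active t P) (\<lambda>z y. ineq_normal (cone P) r \<bullet> kkt_vec z y t - ineq_rhs (cone P) r)})"

definition weight_sum_cons :: "('x, 'th, 'u) cons_expr set" where
  "weight_sum_cons = (\<Union>t<N. \<Union>i<K. eq_cons (\<lambda>z y. (\<Sum>j\<in>J i. y (Weight t i j)) - 1))"

definition support_cons :: "('x, 'th, 'u) cons_expr set" where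
  "support_cons = (\<Union>t<N. \<Union>i<K. \<Union>j\<in>J i. {\<lambda>z y. y (Weight t i j) - y (Supp t i j)})"

definition complementarity_cons :: "('x, 'th, 'u) cons_expr set" where
  "complementarity_cons = (\<Union>t<N. \<Union>i<K. \<Union>j\<in>J i. \<Union>j'\<in>J i.
     {enforce (Supp t i j) (\<lambda>z y. piece_at z t i j - piece_at z t i j')})"

definition kkt_cons :: "('x, 'th, 'u) cons_expr set" where
  "kkt_cons = active_select_cons \<union> active_tight_cons \<union> dual_cone_cons \<union> weight_sum_cons \<union> support_cons
     \<union> complementarity_cons"

lemmas region_cons_defs = region_cons_def region_select_cons_def region_bound_cons_def motive_update_cons_def
lemmas kkt_cons_defs = kkt_cons_def active_select_cons_def active_tight_cons_def dual_cone_cons_def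
  weight_sum_cons_def support_cons_def complementarity_cons_def

definition all_cons :: "('x, 'th, 'u) cons_expr set" where
  "all_cons = objective_cons \<union> nu_cons \<union> om_cons \<union> dynamics_cons \<union> domain_cons \<union> binary_cons
     \<union> region_cons \<union> kkt_cons"

lemma finite_Sigma_pieces: "finite (Sigma {..<K} J)" "finite (Sigma {..<K} (\<lambda>i. J i \<times> J i))"
  using pieces by (auto intro!: finite_SigmaI)

lemma finite_vars: "finite binary_vars" "finite bounded_vars" "finite hypo_vars" "finite aux_vars"
  "finite coord_vars"
  using finite_Sigma_pieces
  by (auto simp: binary_vars_def bounded_vars_def hypo_vars_def hypo_int_vars_def aux_vars_def coord_vars_def)

lemma finite_all_cons: "finite all_cons"
  using pieces
  by (auto simp: all_cons_def objective_cons_def nu_cons_def om_cons_def dynamics_cons_def domain_cons_def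
      binary_cons_def region_cons_defs kkt_cons_defs finite_vars finite_poly_cons
      intro: finite_subset[OF _ finite_lessThan])

lemma mem_coord_vars [simp]:
  "None \<notin> coord_vars"
  "Some (t, Inl j) \<in> coord_vars \<longleftrightarrow> t \<le> N"
  "Some (t, Inr (Inl j')) \<in> coord_vars \<longleftrightarrow> t \<le> N"
  "Some (t, Inr (Inr j'')) \<in> coord_vars \<longleftrightarrow> t < N"
  by (simp_all add: coord_vars_def)

lemma mem_binary_vars [simp]:
  "Region t i \<in> binary_vars \<longleftrightarrow> t < N \<and> i < Ng"
  "Active t P \<in> binary_vars \<longleftrightarrow> t < N \<and> P \<subseteq> {..<nU}"
  "Supp t i j \<in> binary_vars \<longleftrightarrow> t < N \<and> i < K \<and> j \<in> J i"
  "Weight t i j \<notin> binary_vars" "NuReal i l \<notin> binary_vars" "NuInt i l \<notin> binary_vars"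
  "NuLog i \<notin> binary_vars" "OmReal i l \<notin> binary_vars" "OmInt i l \<notin> binary_vars" "OmLog i \<notin> binary_vars"
  by (auto simp: binary_vars_def image_iff)

lemma mem_bounded_vars [simp]:
  "Weight t i j \<in> bounded_vars \<longleftrightarrow> t < N \<and> i < K \<and> j \<in> J i"
  "v \<in> binary_vars \<Longrightarrow> v \<in> bounded_vars"
  by (auto simp: bounded_vars_def binary_vars_def image_iff)

lemma mem_aux_vars [simp]:
  "NuReal i l \<in> aux_vars \<longleftrightarrow> i \<le> nx \<and> l < n_real M\<nu>"
  "NuInt i l \<in> aux_vars \<longleftrightarrow> i \<le> nx \<and> l < n_int M\<nu>"
  "NuLog i \<in> aux_vars \<longleftrightarrow> i \<le> nx"
  "OmReal i l \<in> aux_vars \<longleftrightarrow> i \<le> nu \<and> l < n_real M\<omega>"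
  "OmInt i l \<in> aux_vars \<longleftrightarrow> i \<le> nu \<and> l < n_int M\<omega>"
  "OmLog i \<in> aux_vars \<longleftrightarrow> i \<le> nu"
  "v \<in> bounded_vars \<Longrightarrow> v \<in> aux_vars"
  by (auto simp: aux_vars_def hypo_vars_def hypo_int_vars_def bounded_vars_def binary_vars_def image_iff)

lemma affine_enforce:
  assumes "affine_expr coord_vars bounded_vars e" "j \<in> bounded_vars"
  shows "affine_expr (enc_idx N) aux_vars (enforce j e)"
  unfolding enforce_def
  by (rule affine_big_M[OF affine_expr_mono[OF assms(1)]])
     (auto simp: coord_vars_def aux_vars_def finite_vars assms(2))

lemmas affine_intros = affine_expr_add affine_expr_diff affine_expr_neg affine_expr_scale affine_expr_scale_right
  affine_expr_sum affine_expr_inner_left affine_expr_inner_right affine_expr_component affine_expr_case_option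
  affine_expr_var affine_expr_aux_var affine_expr_const affine_vexpr_lambda affine_vexpr_add affine_vexpr_diff
  affine_vexpr_matrix_vector_mult affine_vexpr_vcat affine_vexpr_sum affine_vexpr_scaleR affine_vexpr_const
  affine_vexpr_state_of affine_vexpr_motive_of affine_vexpr_decision_of

lemma affine_all_cons:
  assumes "c \<in> all_cons"
  shows "affine_expr (enc_idx N) aux_vars c"
proof -
  note fin = finite_vars finite_enc_idx finite_Sigma_pieces
  have "affine_expr (enc_idx N) aux_vars c" if "c \<in> objective_cons \<union> nu_cons \<union> om_cons"
    using that times_x times_u
    by (auto simp: objective_cons_def nu_cons_def om_cons_def mil_row_def hypo_point_def fin
        intro!: affine_intros)
  moreover have "affine_expr (enc_idx N) aux_vars c" if "c \<in> dynamics_cons \<union> domain_cons \<union> binary_cons"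
    using that
    by (auto simp: dynamics_cons_def domain_cons_def binary_cons_def h_affine fin aux_vars_def
        intro!: affine_intros elim!: affine_veq_cons affine_poly_cons)
  moreover have "affine_expr (enc_idx N) aux_vars c" if "c \<in> region_cons"
    using that
    by (auto simp: region_cons_defs stage_vec_def fin intro!: affine_enforce affine_intros
        elim!: affine_eq_cons affine_veq_cons)
  moreover have "affine_expr (enc_idx N) aux_vars c" if "c \<in> kkt_cons"
    using that pieces
    by (auto simp: kkt_cons_defs kkt_vec_def smooth_grad_def piece_at_def piece_val_def h_affine fin
        intro!: affine_enforce affine_intros elim!: affine_eq_cons)
  ultimately show ?thesis
    using assms by (auto simp: all_cons_def)
qed

lemma binary_cons_members:
  "j \<in> bounded_vars \<Longrightarrow> (\<lambda>z y. - y j) \<in> binary_cons"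
  "j \<in> binary_vars \<Longrightarrow> (\<lambda>z y. y j - 1) \<in> binary_cons"
  by (auto simp: binary_cons_def)

lemma binary_cons_imp:
  assumes "\<forall>c\<in>binary_cons. c z y \<le> 0" "\<forall>j\<in>int_vars. y j \<in> \<int>"
  shows "\<forall>j\<in>binary_vars. y j = 0 \<or> y j = 1" and nonneg: "\<forall>j\<in>bounded_vars. 0 \<le> y j"
proof -
  show nonneg: "\<forall>j\<in>bounded_vars. 0 \<le> y j"
    using bspec[OF assms(1) binary_cons_members(1)] by fastforce
  show "\<forall>j\<in>binary_vars. y j = 0 \<or> y j = 1"
    using bspec[OF assms(1) binary_cons_members(2)] nonneg assms(2) Ints_between_0_1 by (simp add: int_vars_def)
qed

lemma region_cons_members:
  assumes "t < N"
  shows "eq_cons (\<lambda>z y. (\<Sum>i<Ng. y (Region t i)) - 1) \<subseteq> region_cons"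
    and "i < Ng \<Longrightarrow> r < mB i \<Longrightarrow> enforce (Region t i) (\<lambda>z y. Bm i r \<bullet> stage_vec z t - \<psi> i r) \<in> region_cons"
    and "i < Ng \<Longrightarrow> enforce (Region t i) ` veq_cons (\<lambda>z y. motive_of z (Suc t) - (G i *v stage_vec z t + chi i))
        \<subseteq> region_cons"
proof -
  have parts: "region_select_cons \<subseteq> region_cons" "region_bound_cons \<subseteq> region_cons"
    "motive_update_cons \<subseteq> region_cons"
    by (auto simp: region_cons_def)
  show "eq_cons (\<lambda>z y. (\<Sum>i<Ng. y (Region t i)) - 1) \<subseteq> region_cons"
    using assms parts(1) unfolding region_select_cons_def by blast
  show "enforce (Region t i) (\<lambda>z y. Bm i r \<bullet> stage_vec z t - \<psi> i r) \<in> region_cons" if "i < Ng" "r < mB i"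
    using assms that parts(2) unfolding region_bound_cons_def by blast
  show "enforce (Region t i) ` veq_cons (\<lambda>z y. motive_of z (Suc t) - (G i *v stage_vec z t + chi i))
      \<subseteq> region_cons" if "i < Ng"
    using assms that parts(3) unfolding motive_update_cons_def by blast
qed

lemma region_cons_imp_motive_update:
  assumes cons: "\<forall>c\<in>region_cons. c z y \<le> 0" and bin: "\<forall>j\<in>binary_vars. y j = 0 \<or> y j = 1" and t: "t < N"
  shows "motive_of z (Suc t) = g (state_of z t) (decision_of z t) (motive_of z t) (\<pi> t)"
proof -
  have "\<forall>c\<in>eq_cons (\<lambda>z y. (\<Sum>i<Ng. y (Region t i)) - 1). c z y \<le> 0"
    using cons region_cons_members(1)[OF t] by blast
  moreover have "\<forall>i\<in>{..<Ng}. y (Region t i) = 0 \<or> y (Region t i) = 1"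
    using bin t by simp
  ultimately obtain i where "i \<in> {..<Ng}" "y (Region t i) = 1"
    by (rule one_hot_select)
  then have i: "i < Ng" "y (Region t i) = 1"
    by simp_all
  have "\<forall>r<mB i. Bm i r \<bullet> stage_vec z t \<le> \<psi> i r"
    using bspec[OF cons region_cons_members(2)[OF t i(1)]] i(2) by (simp add: enforce_def big_M_active)
  then have "g (state_of z t) (decision_of z t) (motive_of z t) (\<pi> t) = G i *v stage_vec z t + chi i"
    using g_region[OF i(1)] by (simp add: stage_vec_def)
  moreover have "\<forall>c\<in>veq_cons (\<lambda>z y. motive_of z (Suc t) - (G i *v stage_vec z t + chi i)). c z y \<le> 0"
  proof
    fix c :: "('x, 'th, 'u) cons_expr"
    assume "c \<in> veq_cons (\<lambda>z y. motive_of z (Suc t) - (G i *v stage_vec z t + chi i))"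
    then have "enforce (Region t i) c \<in> region_cons"
      using region_cons_members(3)[OF t i(1)] by blast
    from bspec[OF cons this] show "c z y \<le> 0"
      using i(2) by (simp add: enforce_def big_M_active)
  qed
  ultimately show ?thesis
    unfolding veq_cons_iff by simp
qed

lemma kkt_cons_members:
  assumes "t < N"
  shows "eq_cons (\<lambda>z y. (\<Sum>P\<in>Pow {..<nU}. y (Active t P)) - 1) \<subseteq> kkt_cons"
    and "P \<subseteq> {..<nU} \<Longrightarrow> l \<in> P \<Longrightarrow> enforce (Active t P) (\<lambda>z y. bU l - aU l \<bullet> decision_of z t) \<in> kkt_cons"
    and "P \<subseteq> {..<nU} \<Longrightarrow> r < ineq_num (cone P) \<Longrightarrow>
      enforce (Active t P) (\<lambda>z y. ineq_normal (cone P) r \<bullet> kkt_vec z y t - ineq_rhs (cone P) r) \<in> kkt_cons"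
    and "i < K \<Longrightarrow> eq_cons (\<lambda>z y. (\<Sum>j\<in>J i. y (Weight t i j)) - 1) \<subseteq> kkt_cons"
    and "i < K \<Longrightarrow> j \<in> J i \<Longrightarrow> (\<lambda>z y. y (Weight t i j) - y (Supp t i j)) \<in> kkt_cons"
    and "i < K \<Longrightarrow> j \<in> J i \<Longrightarrow> j' \<in> J i \<Longrightarrow>
      enforce (Supp t i j) (\<lambda>z y. piece_at z t i j - piece_at z t i j') \<in> kkt_cons"
proof -
  have parts: "active_select_cons \<subseteq> kkt_cons" "active_tight_cons \<subseteq> kkt_cons" "dual_cone_cons \<subseteq> kkt_cons"
    "weight_sum_cons \<subseteq> kkt_cons" "support_cons \<subseteq> kkt_cons" "complementarity_cons \<subseteq> kkt_cons"
    by (auto simp: kkt_cons_def)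
  show "eq_cons (\<lambda>z y. (\<Sum>P\<in>Pow {..<nU}. y (Active t P)) - 1) \<subseteq> kkt_cons"
    using assms parts(1) unfolding active_select_cons_def by blast
  show "enforce (Active t P) (\<lambda>z y. bU l - aU l \<bullet> decision_of z t) \<in> kkt_cons" if "P \<subseteq> {..<nU}" "l \<in> P"
    using assms that parts(2) unfolding active_tight_cons_def by blast
  show "enforce (Active t P) (\<lambda>z y. ineq_normal (cone P) r \<bullet> kkt_vec z y t - ineq_rhs (cone P) r) \<in> kkt_cons"
    if "P \<subseteq> {..<nU}" "r < ineq_num (cone P)"
    using assms that parts(3) unfolding dual_cone_cons_def by blast
  show "eq_cons (\<lambda>z y. (\<Sum>j\<in>J i. y (Weight t i j)) - 1) \<subseteq> kkt_cons" if "i < K"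
    using assms that parts(4) unfolding weight_sum_cons_def by blast
  show "(\<lambda>z y. y (Weight t i j) - y (Supp t i j)) \<in> kkt_cons" if "i < K" "j \<in> J i"
    using assms that parts(5) unfolding support_cons_def by blast
  show "enforce (Supp t i j) (\<lambda>z y. piece_at z t i j - piece_at z t i j') \<in> kkt_cons"
    if "i < K" "j \<in> J i" "j' \<in> J i"
    using assms that parts(6) unfolding complementarity_cons_def by blast
qed

lemma polyhedron_cone: "P \<subseteq> {..<nU} \<Longrightarrow> polyhedron (cone P)"
  by (rule polyhedron_convex_cone_hull) (auto intro: finite_subset)

lemma kkt_cons_imp_kkt:
  assumes cons: "\<forall>c\<in>kkt_cons. c z y \<le> 0" and bin: "\<forall>j\<in>binary_vars. y j = 0 \<or> y j = 1"
    and nonneg: "\<forall>j\<in>bounded_vars. 0 \<le> y j" and t: "t < N" and U: "decision_of z t \<in> Us"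
  shows "\<exists>P. decision_kkt (state_of z t) (motive_of z t) (\<pi> t) (decision_of z t) P (\<lambda>i j. y (Weight t i j))"
proof -
  have "\<forall>c\<in>eq_cons (\<lambda>z y. (\<Sum>P\<in>Pow {..<nU}. y (Active t P)) - 1). c z y \<le> 0"
    using cons kkt_cons_members(1)[OF t] by blast
  moreover have "\<forall>P\<in>Pow {..<nU}. y (Active t P) = 0 \<or> y (Active t P) = 1"
    using bin t by simp
  ultimately obtain P where "P \<in> Pow {..<nU}" "y (Active t P) = 1"
    by (rule one_hot_select)
  then have P: "P \<subseteq> {..<nU}" "y (Active t P) = 1"
    by simp_all
  have active: "aU l \<bullet> decision_of z t = bU l" if "l \<in> P" for l
  proof -
    have "bU l - aU l \<bullet> decision_of z t \<le> 0"
      using bspec[OF cons kkt_cons_members(2)[OF t P(1) that]] P(2) by (simp add: enforce_def big_M_active)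
    moreover have "aU l \<bullet> decision_of z t \<le> bU l"
      using U P(1) that by (auto simp: mem_Us)
    ultimately show ?thesis
      by simp
  qed
  have "kkt_vec z y t \<in> cone P"
  proof -
    have "ineq_normal (cone P) r \<bullet> kkt_vec z y t \<le> ineq_rhs (cone P) r" if "r < ineq_num (cone P)" for r
      using bspec[OF cons kkt_cons_members(3)[OF t P(1) that]] P(2) by (simp add: enforce_def big_M_active)
    then show ?thesis
      by (simp add: polyhedron_ineqs[OF polyhedron_cone[OF P(1)]])
  qed
  moreover have "y (Supp t i j) = 1" if "i < K" "j \<in> J i" "0 < y (Weight t i j)" for i j
  proof -
    have "y (Weight t i j) - y (Supp t i j) \<le> 0"
      using bspec[OF cons kkt_cons_members(5)[OF t that(1,2)]] by simp
    moreover have "y (Supp t i j) = 0 \<or> y (Supp t i j) = 1"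
      using bin t that by simp
    ultimately show ?thesis
      using that(3) by auto
  qed
  then have "piece_at z t i j \<le> piece_at z t i j'"
    if "i < K" "j \<in> J i" "j' \<in> J i" "0 < y (Weight t i j)" for i j j'
    using bspec[OF cons kkt_cons_members(6)[OF t that(1-3)]] that by (simp add: enforce_def big_M_active)
  moreover have "sum (\<lambda>j. y (Weight t i j)) (J i) = 1" if "i < K" for i
  proof -
    have "\<forall>c\<in>eq_cons (\<lambda>z y. (\<Sum>j\<in>J i. y (Weight t i j)) - 1). c z y \<le> 0"
      using cons kkt_cons_members(4)[OF t that] by blast
    then show ?thesis
      unfolding eq_cons_iff by simp
  qed
  ultimately have "decision_kkt (state_of z t) (motive_of z t) (\<pi> t) (decision_of z t) P (\<lambda>i j. y (Weight t i j))"
    using P(1) active nonneg t by (auto simp: decision_kkt_def kkt_vec_def piece_at_def)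
  then show ?thesis
    by blast
qed

lemma hypo_cons_imp_le_objective:
  assumes cons: "\<forall>c\<in>objective_cons \<union> nu_cons \<union> om_cons. c z y \<le> 0" and ints: "\<forall>j\<in>hypo_int_vars. y j \<in> \<int>"
  shows "z None \<le> mle_obj p\<nu> p\<omega> D C xt yt nx nu tx tu (state_of z) (decision_of z)"
proof -
  have "y (NuLog i) \<le> ln (p\<nu> (xt i - D *v state_of z (tx i)))" if "i \<le> nx" for i
  proof -
    have "mil_feasible UNIV M\<nu> (hypo_point (xt i - D *v state_of z (tx i)) (y (NuLog i)))
        (\<lambda>l. y (NuReal i l)) (\<lambda>l. y (NuInt i l))"
      using that cons ints by (auto simp: mil_feasible_def nu_cons_def hypo_int_vars_def)
    then show ?thesis
      using hypo_system[OF log_p\<nu>] by blast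
  qed
  moreover have "y (OmLog j) \<le> ln (p\<omega> (yt j - C *v decision_of z (tu j)))" if "j \<le> nu" for j
  proof -
    have "mil_feasible UNIV M\<omega> (hypo_point (yt j - C *v decision_of z (tu j)) (y (OmLog j)))
        (\<lambda>l. y (OmReal j l)) (\<lambda>l. y (OmInt j l))"
      using that cons ints by (auto simp: mil_feasible_def om_cons_def hypo_int_vars_def)
    then show ?thesis
      using hypo_system[OF log_p\<omega>] by blast
  qed
  moreover have "z None \<le> (\<Sum>i\<le>nx. y (NuLog i)) + (\<Sum>j\<le>nu. y (OmLog j))"
    using cons by (simp add: objective_cons_def)
  ultimately show ?thesis
    unfolding mle_obj_def by (smt (verit) sum_mono atMost_iff)
qed

lemma all_cons_imp_mle_hypo:
  assumes supp: "\<forall>i. i \<notin> enc_idx N \<longrightarrow> z i = 0" and ints: "\<forall>j\<in>int_vars. y j \<in> \<int>"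
    and cons: "\<forall>c\<in>all_cons. c z y \<le> 0"
  shows "z \<in> mle_hypo N Xs Us Ths f h g \<pi> p\<nu> p\<omega> D C xt yt nx nu tx tu"
proof -
  have dom: "\<forall>c\<in>domain_cons. c z y \<le> 0" and dyn: "\<forall>c\<in>dynamics_cons. c z y \<le> 0"
    and bin: "\<forall>c\<in>binary_cons. c z y \<le> 0" and reg: "\<forall>c\<in>region_cons. c z y \<le> 0"
    and kkt: "\<forall>c\<in>kkt_cons. c z y \<le> 0" and hyp: "\<forall>c\<in>objective_cons \<union> nu_cons \<union> om_cons. c z y \<le> 0"
    using cons by (simp_all add: all_cons_def)
  have X: "state_of z t \<in> Xs" and Th: "motive_of z t \<in> Ths" if "t \<le> N" for t
    using dom that by (simp_all add: domain_cons_def ball_Un poly_cons_iff polyhedron_X polyhedron_Th)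
  have U: "decision_of z t \<in> Us" if "t < N" for t
    using dom that by (simp add: domain_cons_def ball_Un poly_cons_iff polyhedron_U)
  have "state_of z (Suc t) = h (state_of z t) (decision_of z t)" if "t < N" for t
  proof -
    have "\<forall>c\<in>veq_cons (\<lambda>z y. state_of z (Suc t) - h (state_of z t) (decision_of z t)). c z y \<le> 0"
      using dyn that by (simp add: dynamics_cons_def)
    then show ?thesis
      unfolding veq_cons_iff by simp
  qed
  moreover have "motive_of z (Suc t) = g (state_of z t) (decision_of z t) (motive_of z t) (\<pi> t)" if "t < N" for t
    using region_cons_imp_motive_update[OF reg binary_cons_imp(1)[OF bin ints] that] .
  moreover have "\<forall>v\<in>Us. f (h (state_of z t) v) v (motive_of z t) (\<pi> t)
      \<le> f (h (state_of z t) (decision_of z t)) (decision_of z t) (motive_of z t) (\<pi> t)" if "t < N" for t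
    using kkt_cons_imp_kkt[OF kkt binary_cons_imp[OF bin ints] that U[OF that]]
      decision_optimal_iff_kkt[OF U[OF that]] by blast
  ultimately have "agent_traj N Xs Us Ths f h g \<pi> (state_of z) (motive_of z) (decision_of z)"
    using X Th U by (simp add: agent_traj_def)
  moreover have "z None \<le> mle_obj p\<nu> p\<omega> D C xt yt nx nu tx tu (state_of z) (decision_of z)"
    using hypo_cons_imp_le_objective[OF hyp] ints by (simp add: int_vars_def)
  ultimately show ?thesis
    unfolding mle_hypo_def using enc_decode[OF supp] by blast
qed

lemma affine_region_exprs:
  assumes "t < N"
  shows "affine_expr coord_vars bounded_vars (\<lambda>z y. Bm i r \<bullet> stage_vec z t - \<psi> i r)"
    and "c \<in> veq_cons (\<lambda>z y. motive_of z (Suc t) - (G i *v stage_vec z t + chi i)) \<Longrightarrow>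
      affine_expr coord_vars bounded_vars c"
  using assms finite_vars
  by (auto simp: stage_vec_def intro!: affine_intros elim!: affine_veq_cons)

lemma affine_kkt_exprs:
  assumes "t < N"
  shows "affine_expr coord_vars bounded_vars (\<lambda>z y. bU l - aU l \<bullet> decision_of z t)"
    and "affine_expr coord_vars bounded_vars (\<lambda>z y. ineq_normal (cone P) r \<bullet> kkt_vec z y t - ineq_rhs (cone P) r)"
    and "affine_expr coord_vars bounded_vars (\<lambda>z y. piece_at z t i j - piece_at z t i j')"
  using assms finite_vars pieces
  by (auto simp: kkt_vec_def smooth_grad_def piece_at_def piece_val_def h_affine intro!: affine_intros)

lemma enforce_le_0:
  assumes "affine_expr coord_vars bounded_vars e"
    and "\<forall>i\<in>coord_vars. \<bar>z i\<bar> \<le> bound_R" "\<forall>j\<in>bounded_vars. \<bar>y j\<bar> \<le> bound_R"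
    and "y j = 0 \<or> y j = 1" "y j = 1 \<Longrightarrow> e z y \<le> 0"
  shows "enforce j e z y \<le> 0"
proof (cases "y j = 1")
  case True
  then show ?thesis
    using assms(5) by (simp add: enforce_def big_M_active)
next
  case False
  then have "y j = 0"
    using assms(4) by simp
  moreover have "e z y \<le> box_bound coord_vars bounded_vars bound_R e"
    by (rule box_bound[OF assms(1-3)])
  ultimately show ?thesis
    by (simp add: enforce_def big_M_def)
qed

definition region_choice :: "(nat \<Rightarrow> real^'x) \<Rightarrow> (nat \<Rightarrow> real^'th) \<Rightarrow> (nat \<Rightarrow> real^'u) \<Rightarrow> nat \<Rightarrow> nat" where
  "region_choice X \<Theta> U t =
     (SOME i. i < Ng \<and> (\<forall>r<mB i. Bm i r \<bullet> vcat (X t) (vcat (U t) (vcat (\<Theta> t) (\<pi> t))) \<le> \<psi> i r))"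

definition kkt_choice :: "(nat \<Rightarrow> real^'x) \<Rightarrow> (nat \<Rightarrow> real^'th) \<Rightarrow> (nat \<Rightarrow> real^'u) \<Rightarrow> nat
    \<Rightarrow> nat set \<times> (nat \<Rightarrow> nat \<Rightarrow> real)" where
  "kkt_choice X \<Theta> U t = (SOME P\<mu>. decision_kkt (X t) (\<Theta> t) (\<pi> t) (U t) (fst P\<mu>) (snd P\<mu>))"

definition hypo_choice :: "'n option mil_system \<Rightarrow> real^'n \<Rightarrow> real \<Rightarrow> (nat \<Rightarrow> real) \<times> (nat \<Rightarrow> real)" where
  "hypo_choice M v r = (SOME yw. mil_feasible UNIV M (hypo_point v r) (fst yw) (snd yw))"

definition witness :: "(nat \<Rightarrow> real^'x) \<Rightarrow> (nat \<Rightarrow> real^'th) \<Rightarrow> (nat \<Rightarrow> real^'u) \<Rightarrow> aux_var \<Rightarrow> real" where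
  "witness X \<Theta> U v = (let
       e\<nu> = \<lambda>i. xt i - D *v X (tx i); e\<omega> = \<lambda>j. yt j - C *v U (tu j);
       w\<nu> = \<lambda>i. hypo_choice M\<nu> (e\<nu> i) (ln (p\<nu> (e\<nu> i))); w\<omega> = \<lambda>j. hypo_choice M\<omega> (e\<omega> j) (ln (p\<omega> (e\<omega> j)))
     in case v of
       NuReal i l \<Rightarrow> fst (w\<nu> i) l | NuInt i l \<Rightarrow> snd (w\<nu> i) l | NuLog i \<Rightarrow> ln (p\<nu> (e\<nu> i))
     | OmReal j l \<Rightarrow> fst (w\<omega> j) l | OmInt j l \<Rightarrow> snd (w\<omega> j) l | OmLog j \<Rightarrow> ln (p\<omega> (e\<omega> j))
     | Region t i \<Rightarrow> of_bool (i = region_choice X \<Theta> U t)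
     | Active t P \<Rightarrow> of_bool (P = fst (kkt_choice X \<Theta> U t))
     | Supp t i j \<Rightarrow> of_bool (0 < snd (kkt_choice X \<Theta> U t) i j)
     | Weight t i j \<Rightarrow> snd (kkt_choice X \<Theta> U t) i j)"

lemma hypo_choice:
  assumes "hypo_milp \<phi>"
  shows "mil_feasible UNIV (hypo_system \<phi>) (hypo_point v (\<phi> v))
     (fst (hypo_choice (hypo_system \<phi>) v (\<phi> v))) (snd (hypo_choice (hypo_system \<phi>) v (\<phi> v)))"
proof -
  have "\<exists>yw. mil_feasible UNIV (hypo_system \<phi>) (hypo_point v (\<phi> v)) (fst yw) (snd yw)"
    using hypo_system[OF assms, of "\<phi> v" v] by auto
  then show ?thesis
    unfolding hypo_choice_def by (rule someI_ex)
qed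

context
  fixes X :: "nat \<Rightarrow> real^'x" and \<Theta> :: "nat \<Rightarrow> real^'th" and U :: "nat \<Rightarrow> real^'u"
  assumes traj: "agent_traj N Xs Us Ths f h g \<pi> X \<Theta> U"
begin

lemma traj_mem: "t \<le> N \<Longrightarrow> X t \<in> Xs" "t \<le> N \<Longrightarrow> \<Theta> t \<in> Ths" "t < N \<Longrightarrow> U t \<in> Us"
  using traj by (auto simp: agent_traj_def)

lemma region_choice:
  assumes "t < N"
  shows "region_choice X \<Theta> U t < Ng"
    "\<forall>r<mB (region_choice X \<Theta> U t). Bm (region_choice X \<Theta> U t) r \<bullet> vcat (X t) (vcat (U t) (vcat (\<Theta> t) (\<pi> t)))
       \<le> \<psi> (region_choice X \<Theta> U t) r"
  using someI_ex[OF regions_cover[OF traj_mem(1,3,2) incentives]] assms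
  unfolding region_choice_def by auto

lemma kkt_choice:
  assumes "t < N"
  shows "decision_kkt (X t) (\<Theta> t) (\<pi> t) (U t) (fst (kkt_choice X \<Theta> U t)) (snd (kkt_choice X \<Theta> U t))"
proof -
  have "\<exists>P\<mu>. decision_kkt (X t) (\<Theta> t) (\<pi> t) (U t) (fst P\<mu>) (snd P\<mu>)"
    using traj assms decision_optimal_iff_kkt[OF traj_mem(3)[OF assms]] by (auto simp: agent_traj_def)
  then show ?thesis
    unfolding kkt_choice_def by (rule someI_ex)
qed

lemma kkt_weights:
  assumes "t < N" "i < K" "j \<in> J i"
  shows "0 \<le> snd (kkt_choice X \<Theta> U t) i j" "snd (kkt_choice X \<Theta> U t) i j \<le> 1"
proof -
  let ?\<mu> = "snd (kkt_choice X \<Theta> U t) i"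
  have "\<forall>j\<in>J i. 0 \<le> ?\<mu> j" "sum ?\<mu> (J i) = 1"
    using kkt_choice[OF assms(1)] assms(2) by (auto simp: decision_kkt_def)
  then show "0 \<le> ?\<mu> j" "?\<mu> j \<le> 1"
    using assms(3) pieces[OF assms(2)] member_le_sum[of j "J i" ?\<mu>] by auto
qed

lemma witness_bounded: "\<forall>j\<in>bounded_vars. \<bar>witness X \<Theta> U j\<bar> \<le> bound_R"
proof -
  have "1 \<le> bound_R"
    by (simp add: bound_R_def)
  then show ?thesis
    using kkt_weights by (fastforce simp: bounded_vars_def binary_vars_def witness_def)
qed

lemma enc_bounded: "\<forall>i\<in>coord_vars. \<bar>enc N X \<Theta> U r i\<bar> \<le> bound_R"
proof
  have comp: "\<bar>v $ j\<bar> \<le> bound_R" if "v \<in> S" "bounded S" "norm_bound S \<le> bound_R" for v :: "real^'n" and j S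
    using component_le_norm_cart[of v j] norm_le_norm_bound[OF that(2,1)] that(3) by linarith
  fix i assume "i \<in> coord_vars"
  then show "\<bar>enc N X \<Theta> U r i\<bar> \<le> bound_R"
    using comp[OF traj_mem(1) bounded_X] comp[OF traj_mem(2) bounded_Th] comp[OF traj_mem(3) bounded_U]
    by (auto simp: coord_vars_def enc_idx_def enc_def bound_R_def split: sum.splits)
qed

lemma enc_at_stage:
  assumes "t < N"
  shows "state_of (enc N X \<Theta> U r) t = X t" "state_of (enc N X \<Theta> U r) (Suc t) = X (Suc t)"
    "motive_of (enc N X \<Theta> U r) t = \<Theta> t" "motive_of (enc N X \<Theta> U r) (Suc t) = \<Theta> (Suc t)"
    "decision_of (enc N X \<Theta> U r) t = U t"
    "stage_vec (enc N X \<Theta> U r) t = vcat (X t) (vcat (U t) (vcat (\<Theta> t) (\<pi> t)))"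
    "piece_at (enc N X \<Theta> U r) t i j = piece_val i j (X t) (U t) (\<Theta> t) (\<pi> t)"
  using assms by (simp_all add: state_of_enc motive_of_enc decision_of_enc stage_vec_def piece_at_def)

lemma witness_region_cons: "\<forall>c\<in>region_cons. c (enc N X \<Theta> U r) (witness X \<Theta> U) \<le> 0"
proof -
  let ?z = "enc N X \<Theta> U r" and ?y = "witness X \<Theta> U"
  have box: "\<forall>i\<in>coord_vars. \<bar>?z i\<bar> \<le> bound_R" "\<forall>j\<in>bounded_vars. \<bar>?y j\<bar> \<le> bound_R"
    using enc_bounded witness_bounded by blast+
  have sum: "(\<Sum>i<Ng. ?y (Region t i)) = 1" if "t < N" for t
    using region_choice(1)[OF that] by (simp add: witness_def of_bool_def sum.delta)
  have member: "enforce (Region t i) (\<lambda>z y. Bm i r \<bullet> stage_vec z t - \<psi> i r) ?z ?y \<le> 0"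
    if "t < N" "i < Ng" "r < mB i" for t i r
    using that region_choice(2)[OF that(1)] enc_at_stage[OF that(1)]
    by (intro enforce_le_0[OF affine_region_exprs(1)[OF that(1)] box]) (auto simp: witness_def)
  have update: "enforce (Region t i) c ?z ?y \<le> 0"
    if "t < N" "i < Ng" "c \<in> veq_cons (\<lambda>z y. motive_of z (Suc t) - (G i *v stage_vec z t + chi i))" for t i c
  proof (rule enforce_le_0[OF affine_region_exprs(2)[OF that(1,3)] box])
    show "?y (Region t i) = 0 \<or> ?y (Region t i) = 1"
      by (simp add: witness_def)
    assume "?y (Region t i) = 1"
    then have "i = region_choice X \<Theta> U t"
      by (simp add: witness_def)
    then have "\<Theta> (Suc t) = G i *v vcat (X t) (vcat (U t) (vcat (\<Theta> t) (\<pi> t))) + chi i"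
      using traj that(1) g_region region_choice[OF that(1)] by (simp add: agent_traj_def)
    then have "motive_of ?z (Suc t) - (G i *v stage_vec ?z t + chi i) = 0"
      using enc_at_stage[OF that(1)] by simp
    then show "c ?z ?y \<le> 0"
      using that(3) veq_cons_iff[of "\<lambda>z y. motive_of z (Suc t) - (G i *v stage_vec z t + chi i)" ?z ?y]
      by blast
  qed
  show ?thesis
    using sum member update by (auto simp: region_cons_defs eq_cons_def)
qed

lemma witness_kkt_cons: "\<forall>c\<in>kkt_cons. c (enc N X \<Theta> U r) (witness X \<Theta> U) \<le> 0"
proof -
  let ?z = "enc N X \<Theta> U r" and ?y = "witness X \<Theta> U"
  have box: "\<forall>i\<in>coord_vars. \<bar>?z i\<bar> \<le> bound_R" "\<forall>j\<in>bounded_vars. \<bar>?y j\<bar> \<le> bound_R"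
    using enc_bounded witness_bounded by blast+
  have bin: "?y v = 0 \<or> ?y v = 1" if "v \<in> {Active t P, Supp t i j}" for v t P i j
    using that by (auto simp: witness_def)
  note kkt = kkt_choice[unfolded decision_kkt_def]
  have sel: "(\<Sum>P\<in>Pow {..<nU}. ?y (Active t P)) = 1" if "t < N" for t
    using kkt[OF that] by (simp add: witness_def of_bool_def sum.delta)
  have active: "enforce (Active t P) (\<lambda>z y. bU l - aU l \<bullet> decision_of z t) ?z ?y \<le> 0"
    if "t < N" "l \<in> P" for t P l
    using kkt[OF that(1)] that enc_at_stage[OF that(1)] bin
    by (intro enforce_le_0[OF affine_kkt_exprs(1)[OF that(1)] box]) (auto simp: witness_def)
  have cone: "enforce (Active t P) (\<lambda>z y. ineq_normal (cone P) r \<bullet> kkt_vec z y t - ineq_rhs (cone P) r) ?z ?y \<le> 0"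
    if "t < N" "r < ineq_num (cone P)" for t P r
  proof (rule enforce_le_0[OF affine_kkt_exprs(2)[OF that(1)] box])
    show "?y (Active t P) = 0 \<or> ?y (Active t P) = 1"
      using bin by blast
    assume "?y (Active t P) = 1"
    then have P: "P = fst (kkt_choice X \<Theta> U t)"
      by (simp add: witness_def)
    then have "kkt_vec ?z ?y t \<in> cone P"
      using kkt[OF that(1)] enc_at_stage[OF that(1)] by (simp add: kkt_vec_def witness_def)
    then show "ineq_normal (cone P) r \<bullet> kkt_vec ?z ?y t - ineq_rhs (cone P) r \<le> 0"
      using that(2) kkt[OF that(1)] P by (simp add: polyhedron_ineqs[OF polyhedron_cone])
  qed
  have weights: "(\<Sum>j\<in>J i. ?y (Weight t i j)) = 1" if "t < N" "i < K" for t i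
    using kkt[OF that(1)] that(2) by (simp add: witness_def)
  have support: "?y (Weight t i j) - ?y (Supp t i j) \<le> 0" if "t < N" "i < K" "j \<in> J i" for t i j
    using kkt_weights[OF that] by (simp add: witness_def)
  have compl: "enforce (Supp t i j) (\<lambda>z y. piece_at z t i j - piece_at z t i j') ?z ?y \<le> 0"
    if "t < N" "i < K" "j \<in> J i" "j' \<in> J i" for t i j j'
    using kkt[OF that(1)] that enc_at_stage[OF that(1)] bin
    by (intro enforce_le_0[OF affine_kkt_exprs(3)[OF that(1)] box]) (auto simp: witness_def)
  show ?thesis
    using sel active cone weights support compl by (auto simp: kkt_cons_defs eq_cons_def)
qed

lemma witness_domain_cons: "\<forall>c\<in>dynamics_cons \<union> domain_cons. c (enc N X \<Theta> U r) (witness X \<Theta> U) \<le> 0"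
proof -
  let ?z = "enc N X \<Theta> U r" and ?y = "witness X \<Theta> U"
  have "\<forall>c\<in>veq_cons (\<lambda>z y. state_of z (Suc t) - h (state_of z t) (decision_of z t)). c ?z ?y \<le> 0"
    if "t < N" for t
    unfolding veq_cons_iff using traj that enc_at_stage[OF that] by (simp add: agent_traj_def)
  moreover have "\<forall>c\<in>poly_cons Xs state_of {..N}. c ?z ?y \<le> 0"
    unfolding poly_cons_iff[OF polyhedron_X] using traj_mem(1) by (simp add: state_of_enc)
  moreover have "\<forall>c\<in>poly_cons Ths motive_of {..N}. c ?z ?y \<le> 0"
    unfolding poly_cons_iff[OF polyhedron_Th] using traj_mem(2) by (simp add: motive_of_enc)
  moreover have "\<forall>c\<in>poly_cons Us decision_of {..<N}. c ?z ?y \<le> 0"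
    unfolding poly_cons_iff[OF polyhedron_U] using traj_mem(3) by (simp add: decision_of_enc)
  ultimately show ?thesis
    by (simp add: dynamics_cons_def domain_cons_def ball_Un)
qed

lemma witness_binary_cons: "\<forall>c\<in>binary_cons. c z (witness X \<Theta> U) \<le> 0"
  using kkt_weights by (auto simp: binary_cons_def bounded_vars_def binary_vars_def witness_def)

end

lemma witness_ints: "\<forall>j\<in>int_vars. witness X \<Theta> U j \<in> \<int>"
  using hypo_choice[OF log_p\<nu>] hypo_choice[OF log_p\<omega>]
  by (auto simp: int_vars_def hypo_int_vars_def binary_vars_def witness_def mil_feasible_def)

lemma witness_hypo_cons:
  assumes "r \<le> mle_obj p\<nu> p\<omega> D C xt yt nx nu tx tu X U"
  shows "\<forall>c\<in>objective_cons \<union> nu_cons \<union> om_cons. c (enc N X \<Theta> U r) (witness X \<Theta> U) \<le> 0"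
  using assms hypo_choice[OF log_p\<nu>] hypo_choice[OF log_p\<omega>] times_x times_u
  by (auto simp: objective_cons_def nu_cons_def om_cons_def mle_obj_def witness_def mil_feasible_def
      state_of_enc decision_of_enc)

lemma mle_hypo_iff_cons:
  "z \<in> mle_hypo N Xs Us Ths f h g \<pi> p\<nu> p\<omega> D C xt yt nx nu tx tu \<longleftrightarrow>
   (\<forall>i. i \<notin> enc_idx N \<longrightarrow> z i = 0) \<and> (\<exists>y. (\<forall>j\<in>int_vars. y j \<in> \<int>) \<and> (\<forall>c\<in>all_cons. c z y \<le> 0))"
proof
  assume "z \<in> mle_hypo N Xs Us Ths f h g \<pi> p\<nu> p\<omega> D C xt yt nx nu tx tu"
  then obtain X \<Theta> U r where z: "z = enc N X \<Theta> U r" and traj: "agent_traj N Xs Us Ths f h g \<pi> X \<Theta> U"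
    and obj: "r \<le> mle_obj p\<nu> p\<omega> D C xt yt nx nu tx tu X U"
    unfolding mle_hypo_def by blast
  have "\<forall>c\<in>all_cons. c z (witness X \<Theta> U) \<le> 0"
    using witness_hypo_cons[OF obj] witness_domain_cons[OF traj] witness_binary_cons[OF traj]
      witness_region_cons[OF traj] witness_kkt_cons[OF traj]
    unfolding z all_cons_def ball_Un by blast
  then show "(\<forall>i. i \<notin> enc_idx N \<longrightarrow> z i = 0) \<and> (\<exists>y. (\<forall>j\<in>int_vars. y j \<in> \<int>) \<and> (\<forall>c\<in>all_cons. c z y \<le> 0))"
    using witness_ints enc_outside_enc_idx z by blast
qed (blast intro: all_cons_imp_mle_hypo)

theorem mle_hypo_milp_rep: "milp_rep (enc_idx N) (mle_hypo N Xs Us Ths f h g \<pi> p\<nu> p\<omega> D C xt yt nx nu tx tu)"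
proof -
  have "int_vars \<subseteq> aux_vars"
    by (auto simp: int_vars_def aux_vars_def hypo_vars_def)
  then have "milp_rep (enc_idx N)
      {z. (\<forall>i. i \<notin> enc_idx N \<longrightarrow> z i = 0) \<and> (\<exists>y. (\<forall>j\<in>int_vars. y j \<in> \<int>) \<and> (\<forall>c\<in>all_cons. c z y \<le> 0))}"
    using finite_vars finite_all_cons affine_all_cons by (intro milp_rep_affine_system) auto
  moreover have "mle_hypo N Xs Us Ths f h g \<pi> p\<nu> p\<omega> D C xt yt nx nu tx tu
      = {z. (\<forall>i. i \<notin> enc_idx N \<longrightarrow> z i = 0) \<and> (\<exists>y. (\<forall>j\<in>int_vars. y j \<in> \<int>) \<and> (\<forall>c\<in>all_cons. c z y \<le> 0))}"
    using mle_hypo_iff_cons by blast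
  ultimately show ?thesis
    by simp
qed

end

theorem corollary1:
  fixes Xs :: "(real^'x) set" and Us :: "(real^'u) set"
    and Ths :: "(real^'th) set" and Ps :: "(real^'p) set"
    and f :: "real^'x \<Rightarrow> real^'u \<Rightarrow> real^'th \<Rightarrow> real^'p \<Rightarrow> real"
    and h :: "real^'x \<Rightarrow> real^'u \<Rightarrow> real^'x"
    and g :: "real^'x \<Rightarrow> real^'u \<Rightarrow> real^'th \<Rightarrow> real^'p \<Rightarrow> real^'th"
    and Q :: "real^('x + 'u)^('x + 'u)" and H :: "real^('x + 'u)^('th + 'p)"
    and K :: nat and J :: "nat \<Rightarrow> nat set"
    and F :: "nat \<Rightarrow> nat \<Rightarrow> real^('x + ('u + ('th + 'p)))" and \<zeta> :: "nat \<Rightarrow> nat \<Rightarrow> real"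
    and A :: "real^'x^'x" and B :: "real^'u^'x" and k :: "real^'x"
    and Ng :: nat and G :: "nat \<Rightarrow> real^('x + ('u + ('th + 'p)))^'th" and chi :: "nat \<Rightarrow> real^'th"
    and mB :: "nat \<Rightarrow> nat" and Bm :: "nat \<Rightarrow> nat \<Rightarrow> real^('x + ('u + ('th + 'p)))"
    and \<psi> :: "nat \<Rightarrow> nat \<Rightarrow> real"
    and D :: "real^'x^'ox" and C :: "real^'u^'oy"
    and p\<nu> :: "real^'ox \<Rightarrow> real" and p\<omega> :: "real^'oy \<Rightarrow> real"
    and q\<nu> :: "real \<Rightarrow> real" and q\<omega> :: "real \<Rightarrow> real"
    and N :: nat and \<pi> :: "nat \<Rightarrow> real^'p"
    and nx :: nat and nu :: nat and tx :: "nat \<Rightarrow> nat" and tu :: "nat \<Rightarrow> nat"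
    and xt :: "nat \<Rightarrow> real^'ox" and yt :: "nat \<Rightarrow> real^'oy"
  assumes
    \<comment> \<open>(A1)\<close>
    A1_X: "polyhedron Xs" "bounded Xs"
    and A1_U: "polyhedron Us" "bounded Us"
    and A1_Th: "polyhedron Ths" "bounded Ths"
    and A1_P: "bounded Ps" "milp_set Ps"
    \<comment> \<open>(A2)\<close>
    and A2_form: "\<And>x u \<theta> p. f x u \<theta> p =
        - (vcat x u \<bullet> (Q *v vcat x u)) + vcat \<theta> p \<bullet> (H *v vcat x u)
        + (\<Sum>i<K. Min ((\<lambda>j. F i j \<bullet> vcat x (vcat u (vcat \<theta> p)) + \<zeta> i j) ` J i))"
    and A2_J: "\<And>i. i < K \<Longrightarrow> finite (J i) \<and> J i \<noteq> {}"
    and A2_Q: "\<And>z. 0 \<le> z \<bullet> (Q *v z)"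
    and A2_cx: "\<And>u \<theta> p. u \<in> Us \<Longrightarrow> \<theta> \<in> Ths \<Longrightarrow> p \<in> Ps \<Longrightarrow> concave_on Xs (\<lambda>x. f x u \<theta> p)"
    and A2_cu: "\<And>x \<theta> p. x \<in> Xs \<Longrightarrow> \<theta> \<in> Ths \<Longrightarrow> p \<in> Ps \<Longrightarrow> strictly_concave_on Us (\<lambda>u. f x u \<theta> p)"
    and A2_cth: "\<And>x u p. x \<in> Xs \<Longrightarrow> u \<in> Us \<Longrightarrow> p \<in> Ps \<Longrightarrow> concave_on Ths (\<lambda>\<theta>. f x u \<theta> p)"
    \<comment> \<open>(A3)\<close>
    and A3_h: "\<And>x u. h x u = A *v x + B *v u + k"
    and A3_hsurj: "\<forall>x'\<in>Xs. \<exists>x\<in>Xs. \<exists>u\<in>Us. h x u = x'"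
    and A3_g: "\<And>i x u \<theta> p. i < Ng \<Longrightarrow>
        (\<forall>r<mB i. Bm i r \<bullet> vcat x (vcat u (vcat \<theta> p)) \<le> \<psi> i r) \<Longrightarrow>
        g x u \<theta> p = G i *v vcat x (vcat u (vcat \<theta> p)) + chi i"
    and A3_bdd: "\<And>i. i < Ng \<Longrightarrow> bounded {w. \<forall>r<mB i. Bm i r \<bullet> w \<le> \<psi> i r}"
    and A3_disj: "\<And>i j. i < Ng \<Longrightarrow> j < Ng \<Longrightarrow> i \<noteq> j \<Longrightarrow>
        interior {w. \<forall>r<mB i. Bm i r \<bullet> w \<le> \<psi> i r} \<inter> interior {w. \<forall>r<mB j. Bm j r \<bullet> w \<le> \<psi> j r} = {}"
    and A3_cover: "\<And>x u \<theta> p. x \<in> Xs \<Longrightarrow> u \<in> Us \<Longrightarrow> \<theta> \<in> Ths \<Longrightarrow> p \<in> Ps \<Longrightarrow>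
        \<exists>i<Ng. \<forall>r<mB i. Bm i r \<bullet> vcat x (vcat u (vcat \<theta> p)) \<le> \<psi> i r"
    and A3_gsurj: "\<forall>\<theta>'\<in>Ths. \<exists>x\<in>Xs. \<exists>u\<in>Us. \<exists>\<theta>\<in>Ths. \<exists>p\<in>Ps. g x u \<theta> p = \<theta>'"
    \<comment> \<open>(A4)\<close>
    and A4_nu: "\<And>v. p\<nu> v = (\<Prod>i\<in>UNIV. q\<nu> (v $ i))" "\<And>s. 0 \<le> q\<nu> s"
        "(q\<nu> has_integral 1) UNIV" "((\<lambda>s. s * q\<nu> s) has_integral 0) UNIV"
        "(\<lambda>s. s\<^sup>2 * q\<nu> s) integrable_on UNIV"
    and A4_om: "\<And>v. p\<omega> v = (\<Prod>i\<in>UNIV. q\<omega> (v $ i))" "\<And>s. 0 \<le> q\<omega> s"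
        "(q\<omega> has_integral 1) UNIV" "((\<lambda>s. s * q\<omega> s) has_integral 0) UNIV"
        "(\<lambda>s. s\<^sup>2 * q\<omega> s) integrable_on UNIV"
    and A4_log: "hypo_milp (\<lambda>v. ln (p\<nu> v))" "hypo_milp (\<lambda>v. ln (p\<omega> v))"
    \<comment> \<open>(A5)\<close>
    and A5: "\<exists>T \<pi>s. (\<forall>t. \<pi>s t \<in> Ps) \<and>
        (\<forall>X \<Theta> U X' \<Theta>' U'.
           agent_traj T Xs Us Ths f h g \<pi>s X \<Theta> U \<and> agent_traj T Xs Us Ths f h g \<pi>s X' \<Theta>' U' \<and>
           (\<forall>t\<le>T. D *v X t = D *v X' t) \<and> (\<forall>t<T. C *v U t = C *v U' t)
           \<longrightarrow> X 0 = X' 0 \<and> \<Theta> 0 = \<Theta>' 0)"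
    \<comment> \<open>problem data: given incentives and measurement times within the horizon\<close>
    and inc: "\<And>t. t < N \<Longrightarrow> \<pi> t \<in> Ps"
    and times_x: "\<And>i. i \<le> nx \<Longrightarrow> tx i \<le> N"
    and times_u: "\<And>j. j \<le> nu \<Longrightarrow> tu j < N"
  shows "milp_rep (enc_idx N) (mle_hypo N Xs Us Ths f h g \<pi> p\<nu> p\<omega> D C xt yt nx nu tx tu)"
proof -
  interpret mle_problem Xs Us Ths Ps f h g Q H K J F \<zeta> A B k Ng G chi mB Bm \<psi> D C p\<nu> p\<omega> N \<pi> nx nu tx tu xt yt
    using A1_X A1_U A1_Th A2_form A2_J A2_Q A3_h A3_g A3_cover A4_log inc times_x times_u
    by unfold_locales blast+
  show ?thesis
    by (rule mle_hypo_milp_rep)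
qed

end
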